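(* Let $D=\{z_i=(x_i,y_i)\}_{i=1}^m$ be a training set with $x_i\in\mathbb{R}^p$, $y_i\in\mathbb{R}$, and let $\mathcal{D}_X$ be the empirical distribution of $x_1,\dots,x_m$. Let $f_\theta$ and $h$ be twice differentiable and let $l(\theta,z)=h(f_\theta(x))-yf_\theta(x)$. Fix $n\ge2$ and $\pmb\alpha=(\alpha_1,\dots,\alpha_n)$ with $\alpha_k>0$, and define the $n$-Mixup loss $$L^{\text{n-mix}}_m(\theta)=\frac{1}{m^n}\sum_{\mathbf{i}=(i_1,\dots,i_n)\in[m]^n}\mathbb{E}_{\pmb\lambda\sim\mathrm{Dir}(\pmb\alpha)}\,l\Big(\theta,\Big(\sum_{k=1}^n\lambda_kx_{i_k},\ \sum_{k=1}^n\lambda_ky_{i_k}\Big)\Big).$$ Let $\tilde{\mathcal{D}}_\Lambda=\sum_{l=1}^n\frac{\alpha_l}{\sum_{i}\alpha_i}\mathrm{Dir}(\alpha_l+1,\alpha_{l+1},\dots,\alpha_{l+n-1})$ (indices taken mod $n$), and let $L_m(\theta)=\frac1m\sum_{i=1}^m l(\theta,z_i)$. Then $$L^{\text{n-mix}}_m(\theta)=L_m(\theta)+\mathcal{R}_1(\theta)+\mathcal{R}_2(\theta)+\mathcal{R}_3(\theta)+\mathbb{E}_{\pmb\lambda\sim\tilde{\mathcal{D}}_\Lambda}\big[o(\|(\lambda_2,\dots,\lambda_n)\|^2)\big],$$ where, with all expectations over $r_x$ taken with $r_x\sim\mathcal{D}_X$ and over $\pmb\lambda$ with $\pmb\lambda\sim\tilde{\mathcal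 D}_\Lambda$, $$\mathcal{R}_1(\theta)=\frac{\mathbb{E}[1-\lambda_1]}{m}\sum_{i=1}^m\big(h'(f_\theta(x_i))-y_i\big)\nabla f_\theta(x_i)^\intercal\,\mathbb{E}[r_x-x_i],$$ $$\mathcal{R}_2(\theta)=\frac{\mathbb{E}[\sum_{j=2}^n\lambda_j^2]}{2m}\sum_{i=1}^m h''(f_\theta(x_i))\,\nabla f_\theta(x_i)^\intercal\,\mathbb{E}[(r_x-x_i)(r_x-x_i)^\intercal]\,\nabla f_\theta(x_i)+\frac{\mathbb{E}[(1-\lambda_1)^2-\sum_{j=2}^n\lambda_j^2]}{2m}\sum_{i=1}^m h''(f_\theta(x_i))\,\nabla f_\theta(x_i)^\intercal\,\mathbb{E}[r_x-x_i]\,\mathbb{E}[r_x-x_i]^\intercal\,\nabla f_\theta(x_i),$$ $$\mathcal{R}_3(\theta)=\frac{\mathbb{E}[\sum_{j=2}^n\lambda_j^2]}{2m}\sum_{i=1}^m\big(h'(f_\theta(x_i))-y_i\big)\,\mathbb{E}\big[(r_x-x_i)^\intercal\nabla^2f_\theta(x_i)(r_x-x_i)\big]+\frac{\mathbb{E}[(1-\lambda_1)^2-\sum_{j=2}^n\lambda_j^2]}{2m}\sum_{i=1}^m\big(h'(f_\theta(x_i))-y_i\big)\,\mathbb{E}[r_x-x_i]^\intercal\,\nabla^2f_\theta(x_i)\,\mathbb{E}[r_x-x_i].$$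
   Context: $\mathrm{Dir}(\pmb\alpha)$ is the Dirichlet distribution on the simplex $\{\pmb\lambda\in[0,1]^n:\sum_k\lambda_k=1\}$. $\nabla f_\theta$, $\nabla^2 f_\theta$ are the gradient and Hessian of $f_\theta$ with respect to its input. $o(\|(\lambda_2,\dots,\lambda_n)\|^2)$ denotes a Taylor remainder term which, divided by $\|(\lambda_2,\dots,\lambda_n)\|^2$, tends to $0$ as $(\lambda_2,\dots,\lambda_n)\to 0$. *)

theory Defs
  imports "HOL-Analysis.Analysis"
begin

text \<open>Conventions: vectors in R^n indexed 0..n-1 (paper index k corresponds to k-1 here),
  encoded as functions nat => real; the Dirichlet distribution Dir(alpha) is the law of
  (1 - sum_{k=1}^{n-1} mu_k, mu_1, ..., mu_{n-1}) where (mu_1..mu_{n-1}) has the usual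
  Dirichlet density w.r.t. Lebesgue measure on the open standard simplex.\<close>

definition dirichlet_density :: "nat \<Rightarrow> (nat \<Rightarrow> real) \<Rightarrow> (nat \<Rightarrow> real) \<Rightarrow> real" where
  "dirichlet_density n alpha lam =
     Gamma (\<Sum>k<n. alpha k) / (\<Prod>k<n. Gamma (alpha k)) * (\<Prod>k<n. lam k powr (alpha k - 1))"

definition dir_complete :: "nat \<Rightarrow> (nat \<Rightarrow> real) \<Rightarrow> (nat \<Rightarrow> real)" where
  "dir_complete n mu = restrict (\<lambda>k. if k = 0 then 1 - (\<Sum>j\<in>{1..<n}. mu j) else mu k) {..<n}"

definition dirichlet :: "nat \<Rightarrow> (nat \<Rightarrow> real) \<Rightarrow> (nat \<Rightarrow> real) measure" where
  "dirichlet n alpha =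
     distr
       (density (PiM {1..<n} (\<lambda>_. lborel))
          (\<lambda>mu. ennreal (indicator {mu. (\<forall>k\<in>{1..<n}. 0 < mu k) \<and> (\<Sum>k\<in>{1..<n}. mu k) < 1} mu
                           * dirichlet_density n alpha (dir_complete n mu))))
       (PiM {..<n} (\<lambda>_. lborel)) (dir_complete n)"

definition dir_shift :: "nat \<Rightarrow> (nat \<Rightarrow> real) \<Rightarrow> nat \<Rightarrow> (nat \<Rightarrow> real)" where
  "dir_shift n alpha l = (\<lambda>k. alpha ((l + k) mod n) + (if k = 0 then 1 else 0))"

definition tilde_expect :: "nat \<Rightarrow> (nat \<Rightarrow> real) \<Rightarrow> ((nat \<Rightarrow> real) \<Rightarrow> real) \<Rightarrow> real" where
  "tilde_expect n alpha g =
     (\<Sum>l<n. alpha l / (\<Sum>i<n. alpha i) * integral\<^sup>L (dirichlet n (dir_shift n alpha l)) g)"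

definition loss :: "(real \<Rightarrow> real) \<Rightarrow> ('t \<Rightarrow> real^'p \<Rightarrow> real) \<Rightarrow> 't \<Rightarrow> (real^'p) \<times> real \<Rightarrow> real" where
  "loss h f theta z = h (f theta (fst z)) - snd z * f theta (fst z)"

definition nmix_loss ::
  "nat \<Rightarrow> (nat \<Rightarrow> real) \<Rightarrow> nat \<Rightarrow> (real \<Rightarrow> real) \<Rightarrow> ('t \<Rightarrow> real^'p \<Rightarrow> real) \<Rightarrow> 't
     \<Rightarrow> (nat \<Rightarrow> real^'p) \<Rightarrow> (nat \<Rightarrow> real) \<Rightarrow> real" where
  "nmix_loss n alpha m h f theta x y =
     1 / real m ^ n * (\<Sum>i\<in>PiE {..<n} (\<lambda>_. {..<m}).
        integral\<^sup>L (dirichlet n alpha)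
          (\<lambda>lam. loss h f theta ((\<Sum>k<n. lam k *\<^sub>R x (i k)), (\<Sum>k<n. lam k * y (i k)))))"

definition std_loss ::
  "nat \<Rightarrow> (real \<Rightarrow> real) \<Rightarrow> ('t \<Rightarrow> real^'p \<Rightarrow> real) \<Rightarrow> 't \<Rightarrow> (nat \<Rightarrow> real^'p) \<Rightarrow> (nat \<Rightarrow> real) \<Rightarrow> real" where
  "std_loss m h f theta x y = 1 / real m * (\<Sum>i<m. loss h f theta (x i, y i))"

definition outer :: "real^'p \<Rightarrow> real^'p \<Rightarrow> real^'p^'p" where
  "outer u v = (\<chi> a b. u $ a * v $ b)"

definition emp_mean_diff :: "nat \<Rightarrow> (nat \<Rightarrow> real^'p) \<Rightarrow> nat \<Rightarrow> real^'p" where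
  "emp_mean_diff m x i = (1 / real m) *\<^sub>R (\<Sum>j<m. x j - x i)"

text \<open>The remainder term: for fixed lam, the average over the anchor index i and the
  other indices j_1..j_{n-1} of the second-order Taylor remainder, in (lam_1,...,lam_{n-1})
  around 0, of lam \<mapsto> l(theta, (x_i + sum_{k>=1} lam_k (x_{j_k} - x_i), y_i)).\<close>
definition mix_remainder ::
  "nat \<Rightarrow> nat \<Rightarrow> (real \<Rightarrow> real) \<Rightarrow> (real \<Rightarrow> real) \<Rightarrow> (real \<Rightarrow> real) \<Rightarrow> ('t \<Rightarrow> real^'p \<Rightarrow> real)
     \<Rightarrow> (real^'p \<Rightarrow> real^'p) \<Rightarrow> (real^'p \<Rightarrow> real^'p^'p) \<Rightarrow> 't
     \<Rightarrow> (nat \<Rightarrow> real^'p) \<Rightarrow> (nat \<Rightarrow> real) \<Rightarrow> (nat \<Rightarrow> real) \<Rightarrow> real" where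
  "mix_remainder n m h h' h'' f gradf hessf theta x y lam =
     1 / real m * (\<Sum>i<m. 1 / real m ^ (n - 1) * (\<Sum>j\<in>PiE {1..<n} (\<lambda>_. {..<m}).
        (let d = (\<Sum>k\<in>{1..<n}. lam k *\<^sub>R (x (j k) - x i)) in
          loss h f theta (x i + d, y i)
          - (loss h f theta (x i, y i)
             + (h' (f theta (x i)) - y i) * (gradf (x i) \<bullet> d)
             + 1 / 2 * (h'' (f theta (x i)) * (gradf (x i) \<bullet> d) ^ 2
                        + (h' (f theta (x i)) - y i) * (d \<bullet> (hessf (x i) *v d)))))))"

end

theory Submission
  imports Defs "HOL-Probability.Probability_Measure" "HOL-Combinatorics.Transposition"
begin

(* The loss is affine in the label, so the label of a mixed sample, the
   lambda-weighted mean of the labels y (i k), can be taken out of the loss: the n-Mixup loss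
   becomes sum_l E_Dir(alpha) [lambda_l * loss (x_mix, y (i l))].  Size biasing,
   E_Dir(alpha) [lambda_l * g] = alpha_l / (sum alpha) * E_Dir(alpha + e_l) [g], followed by the
   cyclic relabelling of the coordinates that moves l to 0 (the Dirichlet distribution is
   equivariant under permutations of its coordinates), turns this into the mean under the
   mixture tilde D_Lambda of the loss of the mixed input labelled by its anchor sample i 0.
   Writing the mixed input as x (i 0) + sum_{k>=1} lambda_k (x (i k) - x (i 0)) and expanding
   the loss to second order around x (i 0), the means over the independent indices
   i 1, ..., i (n-1) of the linear and quadratic Taylor terms give R1, R2 and R3.  The offset
   is bounded by a multiple of the norm of (lambda_1, ..., lambda_(n-1)), so the Peano
   remainder is uniformly o(sum_{k>=1} lambda_k^2). *)

section \<open>The Dirichlet distribution as a probability measure\<close>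

abbreviation lborel_PiM :: "nat set \<Rightarrow> (nat \<Rightarrow> real) measure" where
  "lborel_PiM I \<equiv> PiM I (\<lambda>_. lborel)"

definition open_corner_simplex :: "nat set \<Rightarrow> real \<Rightarrow> (nat \<Rightarrow> real) set" where
  "open_corner_simplex I s = {mu. (\<forall>k\<in>I. 0 < mu k) \<and> (\<Sum>k\<in>I. mu k) < s}"

definition std_simplex :: "nat \<Rightarrow> (nat \<Rightarrow> real) set" where
  "std_simplex n = {lam. (\<forall>k<n. 0 \<le> lam k) \<and> (\<Sum>k<n. lam k) = 1}"

definition dirichlet_tail_density :: "nat \<Rightarrow> (nat \<Rightarrow> real) \<Rightarrow> (nat \<Rightarrow> real) \<Rightarrow> real" where
  "dirichlet_tail_density n b mu =
     indicator (open_corner_simplex {1..<n} 1) mu * dirichlet_density n b (dir_complete n mu)"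

lemma measurable_component_lborel: "k \<in> I \<Longrightarrow> (\<lambda>mu. mu k) \<in> borel_measurable (lborel_PiM I)"
  using measurable_component_singleton[of k I "\<lambda>_. lborel"] by simp

lemma pred_open_corner_simplex [measurable]:
  "finite I \<Longrightarrow> Measurable.pred (lborel_PiM I) (\<lambda>mu. mu \<in> open_corner_simplex I s)"
  unfolding open_corner_simplex_def
  by (auto intro!: pred_intros_finite borel_measurable_sum measurable_component_lborel
      pred_less_const pred_const_less)

lemma pred_std_simplex [measurable]:
  "Measurable.pred (lborel_PiM {..<n}) (\<lambda>lam. lam \<in> std_simplex n)"
  unfolding std_simplex_def
  by (auto intro!: pred_intros_finite pred_intros_logic borel_measurable_sum measurable_component_lborel
      pred_le_const pred_const_le pred_eq_const1)

lemma measurable_dir_complete_component: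
  "k < n \<Longrightarrow> (\<lambda>mu. dir_complete n mu k) \<in> borel_measurable (lborel_PiM {1..<n})"
  unfolding dir_complete_def
  by (cases "k = 0") (auto intro!: borel_measurable_diff borel_measurable_sum measurable_component_lborel)

lemma measurable_dir_complete [measurable]:
  "dir_complete n \<in> measurable (lborel_PiM {1..<n}) (lborel_PiM {..<n})"
  apply (rule measurable_PiM_single')
  subgoal for i using measurable_dir_complete_component[of i n] by (simp add: dir_complete_def)
  by (auto simp: dir_complete_def split: if_splits)

lemma borel_measurable_dirichlet_tail_density [measurable]:
  "dirichlet_tail_density n b \<in> borel_measurable (lborel_PiM {1..<n})"
proof -
  have "(\<lambda>mu. \<Prod>k<n. dir_complete n mu k powr (b k - 1)) \<in> borel_measurable (lborel_PiM {1..<n})"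
    by (intro borel_measurable_prod powr_real_measurable measurable_dir_complete_component) auto
  moreover have "finite {1..<n}" by simp
  ultimately show ?thesis
    unfolding dirichlet_tail_density_def dirichlet_density_def by measurable
qed

(* Simplification rewrites {1..<n} to {Suc 0..<n}; these copies keep the measurability
   prover working on the rewritten goals. *)
lemma measurable_dir_complete_Suc0 [measurable]:
  "dir_complete n \<in> measurable (lborel_PiM {Suc 0..<n}) (lborel_PiM {..<n})"
  using measurable_dir_complete[of n] by simp

lemma borel_measurable_dirichlet_tail_density_Suc0 [measurable]:
  "dirichlet_tail_density n b \<in> borel_measurable (lborel_PiM {Suc 0..<n})"
  using borel_measurable_dirichlet_tail_density[of n b] by simp

lemma dirichlet_eq_distr_density:
  "dirichlet n b =
     distr (density (lborel_PiM {1..<n}) (\<lambda>mu. ennreal (dirichlet_tail_density n b mu)))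
       (lborel_PiM {..<n}) (dir_complete n)"
  unfolding dirichlet_def dirichlet_tail_density_def open_corner_simplex_def by simp

lemma sets_dirichlet [measurable_cong]: "sets (dirichlet n b) = sets (lborel_PiM {..<n})"
  by (simp add: dirichlet_def)

lemma sum_dir_complete: "n \<ge> 1 \<Longrightarrow> (\<Sum>k<n. dir_complete n mu k) = 1"
proof -
  assume n: "n \<ge> 1"
  then have "{..<n} = insert 0 {1..<n}" by auto
  then have "(\<Sum>k<n. dir_complete n mu k) = dir_complete n mu 0 + (\<Sum>k\<in>{1..<n}. dir_complete n mu k)"
    by simp
  also have "(\<Sum>k\<in>{1..<n}. dir_complete n mu k) = (\<Sum>k\<in>{1..<n}. mu k)"
    by (rule sum.cong) (auto simp: dir_complete_def)
  finally show ?thesis using n by (simp add: dir_complete_def)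
qed

lemma dir_complete_pos_iff:
  assumes "n \<ge> 1"
  shows "(\<forall>k<n. 0 < dir_complete n mu k) \<longleftrightarrow> mu \<in> open_corner_simplex {1..<n} 1"
  using assms by (force simp: dir_complete_def open_corner_simplex_def)

lemma dir_complete_in_std_simplex:
  "n \<ge> 1 \<Longrightarrow> mu \<in> open_corner_simplex {1..<n} 1 \<Longrightarrow> dir_complete n mu \<in> std_simplex n"
  using dir_complete_pos_iff[of n mu] sum_dir_complete[of n mu]
  by (auto simp: std_simplex_def less_imp_le)

lemma std_simplex_component_le_1: "lam \<in> std_simplex n \<Longrightarrow> k < n \<Longrightarrow> 0 \<le> lam k \<and> lam k \<le> 1"
proof -
  assume lam: "lam \<in> std_simplex n" and k: "k < n"
  have "lam k \<le> (\<Sum>j<n. lam j)" using lam k by (intro member_le_sum) (auto simp: std_simplex_def)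
  then show ?thesis using lam k by (auto simp: std_simplex_def)
qed

lemma std_simplex_moment_bounds:
  assumes lam: "lam \<in> std_simplex n" and n: "n \<ge> 1"
  shows "\<bar>1 - lam 0\<bar> \<le> 1" and "\<bar>\<Sum>j\<in>{1..<n}. lam j ^ 2\<bar> \<le> real n"
    and "\<bar>(1 - lam 0) ^ 2 - (\<Sum>j\<in>{1..<n}. lam j ^ 2)\<bar> \<le> 1 + real n"
proof -
  show l0: "\<bar>1 - lam 0\<bar> \<le> 1" using std_simplex_component_le_1[OF lam, of 0] n by auto
  have "(\<Sum>j\<in>{1..<n}. lam j ^ 2) \<le> (\<Sum>j\<in>{1..<n}. 1)"
    using std_simplex_component_le_1[OF lam] by (intro sum_mono) (simp add: power_le_one)
  moreover have S2_nonneg: "(\<Sum>j\<in>{1..<n}. lam j ^ 2) \<ge> 0" by (intro sum_nonneg) auto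
  ultimately show "\<bar>\<Sum>j\<in>{1..<n}. lam j ^ 2\<bar> \<le> real n" by simp
  moreover have "(1 - lam 0) ^ 2 \<le> 1" using l0 by (simp add: abs_square_le_1)
  moreover have "(1 - lam 0) ^ 2 \<ge> 0" by simp
  ultimately show "\<bar>(1 - lam 0) ^ 2 - (\<Sum>j\<in>{1..<n}. lam j ^ 2)\<bar> \<le> 1 + real n"
    using S2_nonneg unfolding abs_le_iff by linarith
qed

lemma nn_integral_beta_unit:
  assumes a: "a > 0" and b: "b > (0::real)"
  shows "(\<integral>\<^sup>+ t. ennreal (indicator {0<..<1} t * (t powr (a-1) * (1-t) powr (b-1))) \<partial>lborel)
       = ennreal (Beta a b)"
proof -
  have "(\<integral>\<^sup>+ t. ennreal (t powr (a-1) * (1-t) powr (b-1)) * indicator {0..1} t \<partial>lborel) = ennreal (Beta a b)"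
    by (rule nn_integral_has_integral_lebesgue'[OF _ has_integral_Beta_real[OF a b]]) auto
  moreover have "(\<integral>\<^sup>+ t. ennreal (indicator {0<..<1} t * (t powr (a-1) * (1-t) powr (b-1))) \<partial>lborel)
     = (\<integral>\<^sup>+ t. ennreal (t powr (a-1) * (1-t) powr (b-1)) * indicator {0..1} t \<partial>lborel)"
    by (intro nn_integral_cong) (auto simp: indicator_def)
  ultimately show ?thesis by simp
qed

lemma nn_integral_beta_interval:
  assumes a: "a > 0" and b: "b > (0::real)" and r: "r > 0"
  shows "(\<integral>\<^sup>+ t. ennreal (indicator {0<..<r} t * (t powr (a-1) * (r-t) powr (b-1))) \<partial>lborel)
        = ennreal (r powr (a+b-1) * Beta a b)"
proof -
  let ?g = "\<lambda>t. ennreal (indicator {0<..<r} t * (t powr (a-1) * (r-t) powr (b-1)))"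
  let ?g1 = "\<lambda>t. ennreal (indicator {0<..<1} t * (t powr (a-1) * (1-t) powr (b-1)))"
  have scale: "?g (0 + r * t) = ennreal (r powr (a+b-2)) * ?g1 t" for t
  proof (cases "0 < t \<and> t < 1")
    case True
    have "(r * t) powr (a-1) = r powr (a-1) * t powr (a-1)"
      using True r by (simp add: powr_mult)
    moreover have "(r - r * t) powr (b-1) = r powr (b-1) * (1-t) powr (b-1)"
      using True r by (subst powr_mult[symmetric]) (auto simp: algebra_simps)
    moreover have "r powr (a+b-2) = r powr (a-1) * r powr (b-1)"
      using r by (simp add: powr_add[symmetric])
    ultimately have "(r * t) powr (a-1) * (r - r * t) powr (b-1)
        = r powr (a+b-2) * (t powr (a-1) * (1-t) powr (b-1))"
      by simp
    moreover have "r * t \<in> {0<..<r}" using True r by auto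
    ultimately show ?thesis using True r by (simp add: ennreal_mult[symmetric] indicator_def)
  next
    case False
    then have "r * t \<notin> {0<..<r}" using r
      by (auto simp: mult_less_cancel_left2 zero_less_mult_iff)
    then show ?thesis using False by simp
  qed
  have "(\<integral>\<^sup>+ t. ?g t \<partial>lborel) = ennreal r * (\<integral>\<^sup>+ t. ?g (0 + r * t) \<partial>lborel)"
    using nn_integral_real_affine[of ?g r 0] r by simp
  also have "\<dots> = ennreal r * (ennreal (r powr (a+b-2)) * ennreal (Beta a b))"
    unfolding scale by (subst nn_integral_cmult) (auto simp: nn_integral_beta_unit[OF a b])
  also have "\<dots> = ennreal (r powr (a+b-1) * Beta a b)"
    using r a b by (simp add: ennreal_mult[symmetric] Beta_def powr_mult_base mult.assoc)
  finally show ?thesis .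
qed

definition dirichlet_kernel :: "nat set \<Rightarrow> (nat \<Rightarrow> real) \<Rightarrow> real \<Rightarrow> real \<Rightarrow> (nat \<Rightarrow> real) \<Rightarrow> real" where
  "dirichlet_kernel I b b0 s mu = indicator (open_corner_simplex I s) mu *
     ((\<Prod>k\<in>I. mu k powr (b k - 1)) * (s - (\<Sum>k\<in>I. mu k)) powr (b0 - 1))"

lemma borel_measurable_dirichlet_kernel [measurable]:
  "finite I \<Longrightarrow> dirichlet_kernel I b b0 s \<in> borel_measurable (lborel_PiM I)"
proof -
  assume fin: "finite I"
  have "(\<lambda>mu. \<Prod>k\<in>I. mu k powr (b k - 1)) \<in> borel_measurable (lborel_PiM I)"
    by (intro borel_measurable_prod powr_real_measurable measurable_component_lborel) auto
  moreover have "(\<lambda>mu. (s - (\<Sum>k\<in>I. mu k)) powr (b0 - 1)) \<in> borel_measurable (lborel_PiM I)"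
    by (intro borel_measurable_sum powr_real_measurable measurable_component_lborel borel_measurable_diff) auto
  ultimately show ?thesis unfolding dirichlet_kernel_def using fin by measurable
qed

lemma dirichlet_kernel_nonneg: "dirichlet_kernel I b b0 s mu \<ge> 0"
  unfolding dirichlet_kernel_def by (auto simp: indicator_def intro!: mult_nonneg_nonneg prod_nonneg)

text \<open>Integrating out one coordinate merges it into the implicit last coordinate:
  the fibre integral is a Beta integral.\<close>

lemma nn_integral_dirichlet_kernel_fibre:
  assumes a: "a \<notin> I" "finite I" and pos: "b a > 0" "b0 > 0" "s > 0"
  shows "(\<integral>\<^sup>+ t. ennreal (dirichlet_kernel (insert a I) b b0 s (mu(a := t))) \<partial>lborel)
       = ennreal (dirichlet_kernel I b (b a + b0) s mu) * ennreal (Beta (b a) b0)"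
proof -
  let ?r = "s - (\<Sum>k\<in>I. mu k)"
  let ?c = "indicator {mu. \<forall>k\<in>I. 0 < mu k} mu * (\<Prod>k\<in>I. mu k powr (b k - 1)) :: real"
  let ?beta = "\<lambda>t. indicator {0<..<?r} t * (t powr (b a - 1) * (?r - t) powr (b0 - 1)) :: real"
  have c0: "?c \<ge> 0" by (auto intro!: mult_nonneg_nonneg prod_nonneg)
  have pt: "dirichlet_kernel (insert a I) b b0 s (mu(a := t)) = ?c * ?beta t" for t
  proof -
    have sI: "(\<Sum>k\<in>I. (mu(a := t)) k) = (\<Sum>k\<in>I. mu k)"
      by (rule sum.cong) (use a in auto)
    have pI: "(\<Prod>k\<in>I. (mu(a := t)) k powr (b k - 1)) = (\<Prod>k\<in>I. mu k powr (b k - 1))"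
      by (rule prod.cong) (use a in auto)
    have "mu(a := t) \<in> open_corner_simplex (insert a I) s \<longleftrightarrow> (\<forall>k\<in>I. 0 < mu k) \<and> t \<in> {0<..<?r}"
      using a sI by (auto simp: open_corner_simplex_def)
    then show ?thesis
      unfolding dirichlet_kernel_def using a sI pI by (auto simp: indicator_def algebra_simps)
  qed
  have "(\<integral>\<^sup>+ t. ennreal (dirichlet_kernel (insert a I) b b0 s (mu(a := t))) \<partial>lborel)
      = ennreal ?c * (\<integral>\<^sup>+ t. ennreal (?beta t) \<partial>lborel)"
    unfolding pt using c0 by (subst nn_integral_cmult[symmetric]) (auto simp: ennreal_mult)
  also have "\<dots> = ennreal (dirichlet_kernel I b (b a + b0) s mu) * ennreal (Beta (b a) b0)"
  proof (cases "?r > 0")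
    case True
    have "Beta (b a) b0 > 0" using pos by (simp add: Beta_def)
    then show ?thesis
      unfolding nn_integral_beta_interval[OF pos(1,2) True] using True c0
      by (auto simp: dirichlet_kernel_def open_corner_simplex_def indicator_def
          ennreal_mult[symmetric] algebra_simps)
  next
    case False
    then show ?thesis by (auto simp: dirichlet_kernel_def open_corner_simplex_def)
  qed
  finally show ?thesis .
qed

lemma Gamma_Beta_telescope:
  fixes a b0 c :: real
  assumes "a > 0" "b0 > 0" "c \<ge> 0"
  shows "Gamma (a + b0) / Gamma (c + (a + b0)) * Beta a b0 = Gamma a * Gamma b0 / Gamma (c + a + b0)"
proof -
  have "Gamma (a + b0) > 0" "Gamma (c + (a + b0)) > 0" using assms by auto
  then show ?thesis by (simp add: Beta_def algebra_simps)
qed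

lemma nn_integral_dirichlet_kernel:
  assumes "finite I" "\<forall>k\<in>I. b k > 0" "b0 > 0" "s > 0"
  shows "(\<integral>\<^sup>+ mu. ennreal (dirichlet_kernel I b b0 s mu) \<partial>lborel_PiM I)
       = ennreal (s powr (sum b I + b0 - 1) * (\<Prod>k\<in>I. Gamma (b k)) * Gamma b0 / Gamma (sum b I + b0))"
  using assms
proof (induction I arbitrary: b0 rule: finite_induct)
  case empty
  interpret product_sigma_finite "\<lambda>_::nat. lborel :: real measure" by unfold_locales
  have "Gamma b0 > 0" using empty by auto
  then have "s powr (sum b {} + b0 - 1) * (\<Prod>k\<in>{}. Gamma (b k)) * Gamma b0 / Gamma (sum b {} + b0)
      = s powr (b0 - 1)"
    by simp
  then show ?case
    by (subst nn_integral_empty) (use empty in \<open>auto simp: dirichlet_kernel_def open_corner_simplex_def\<close>)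
next
  case (insert a I)
  interpret product_sigma_finite "\<lambda>_::nat. lborel :: real measure" by unfold_locales
  have ba: "b a > 0" using insert by auto
  have sI: "sum b I \<ge> 0" using insert by (intro sum_nonneg) (auto intro: less_imp_le)
  have "(\<integral>\<^sup>+ mu. ennreal (dirichlet_kernel (insert a I) b b0 s mu) \<partial>lborel_PiM (insert a I))
     = (\<integral>\<^sup>+ mu. (\<integral>\<^sup>+ t. ennreal (dirichlet_kernel (insert a I) b b0 s (mu(a := t))) \<partial>lborel) \<partial>lborel_PiM I)"
    by (rule product_nn_integral_insert) (use insert in auto)
  also have "\<dots> = (\<integral>\<^sup>+ mu. ennreal (dirichlet_kernel I b (b a + b0) s mu) \<partial>lborel_PiM I) * ennreal (Beta (b a) b0)"
    using insert ba
    by (simp add: nn_integral_dirichlet_kernel_fibre nn_integral_multc)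
  also have "\<dots> = ennreal (s powr (sum b I + (b a + b0) - 1) * (\<Prod>k\<in>I. Gamma (b k))
      * Gamma (b a + b0) / Gamma (sum b I + (b a + b0))) * ennreal (Beta (b a) b0)"
    using insert ba by (subst insert.IH) auto
  also have "\<dots> = ennreal (s powr (sum b I + (b a + b0) - 1) * (\<Prod>k\<in>I. Gamma (b k))
      * (Gamma (b a + b0) / Gamma (sum b I + (b a + b0)) * Beta (b a) b0))"
  proof -
    have "(\<Prod>k\<in>I. Gamma (b k)) > 0" using insert by (auto intro!: prod_pos)
    moreover have "Gamma (b a + b0) > 0" "Gamma (sum b I + (b a + b0)) > 0" "Beta (b a) b0 > 0"
      using insert ba sI by (auto simp: Beta_def)
    ultimately show ?thesis by (simp add: ennreal_mult[symmetric])
  qed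
  also have "\<dots> = ennreal (s powr (sum b (insert a I) + b0 - 1) * (\<Prod>k\<in>insert a I. Gamma (b k))
      * Gamma b0 / Gamma (sum b (insert a I) + b0))"
    unfolding Gamma_Beta_telescope[OF ba insert(5) sI] using insert by (simp add: algebra_simps)
  finally show ?case .
qed

lemma dirichlet_tail_density_eq_kernel:
  assumes "n \<ge> 1"
  shows "dirichlet_tail_density n b mu
       = Gamma (\<Sum>k<n. b k) / (\<Prod>k<n. Gamma (b k)) * dirichlet_kernel {1..<n} b (b 0) 1 mu"
proof -
  have n: "{..<n} = insert 0 {1..<n}" using assms by auto
  have "(\<Prod>k\<in>{1..<n}. dir_complete n mu k powr (b k - 1)) = (\<Prod>k\<in>{1..<n}. mu k powr (b k - 1))"
    by (rule prod.cong) (auto simp: dir_complete_def)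
  then have "(\<Prod>k<n. dir_complete n mu k powr (b k - 1)) =
      (\<Prod>k\<in>{1..<n}. mu k powr (b k - 1)) * (1 - (\<Sum>k\<in>{1..<n}. mu k)) powr (b 0 - 1)"
    unfolding n using assms by (simp add: dir_complete_def)
  then show ?thesis
    unfolding dirichlet_tail_density_def dirichlet_density_def dirichlet_kernel_def by simp
qed

lemma Gamma_sum_pos: "(n::nat) \<ge> 1 \<Longrightarrow> \<forall>k<n. 0 < b k \<Longrightarrow> Gamma (\<Sum>k<n. b k :: real) > 0"
  by (intro Gamma_real_pos sum_pos) (auto simp: lessThan_empty_iff)

lemma dirichlet_tail_density_nonneg:
  assumes "n \<ge> 1" "\<forall>k<n. 0 < b k"
  shows "dirichlet_tail_density n b mu \<ge> 0"
proof -
  have "Gamma (\<Sum>k<n. b k) / (\<Prod>k<n. Gamma (b k)) \<ge> 0"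
    using Gamma_sum_pos[OF assms] assms(2) by (auto intro!: divide_nonneg_nonneg prod_nonneg)
  then show ?thesis
    unfolding dirichlet_tail_density_eq_kernel[OF assms(1)] by (rule mult_nonneg_nonneg[OF _ dirichlet_kernel_nonneg])
qed

lemma nn_integral_dirichlet_tail_density:
  assumes n: "n \<ge> 1" and b: "\<forall>k<n. 0 < b k"
  shows "(\<integral>\<^sup>+ mu. ennreal (dirichlet_tail_density n b mu) \<partial>lborel_PiM {1..<n}) = 1"
proof -
  let ?C = "Gamma (\<Sum>k<n. b k) / (\<Prod>k<n. Gamma (b k))"
  have C: "?C > 0" using Gamma_sum_pos[OF n b] b by (auto intro!: prod_pos divide_pos_pos)
  have n0: "{..<n} = insert 0 {1..<n}" using n by auto
  have P: "(\<Prod>k\<in>{1..<n}. Gamma (b k)) > 0" using b by (auto intro!: prod_pos)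
  have "sum b {1..<n} \<ge> 0" using b by (intro sum_nonneg) (auto intro: less_imp_le)
  then have G: "Gamma (b 0) > 0" "Gamma (sum b {1..<n} + b 0) > 0" using b n by auto
  have "(\<integral>\<^sup>+ mu. ennreal (dirichlet_tail_density n b mu) \<partial>lborel_PiM {1..<n})
      = (\<integral>\<^sup>+ mu. ennreal ?C * ennreal (dirichlet_kernel {1..<n} b (b 0) 1 mu) \<partial>lborel_PiM {1..<n})"
    unfolding dirichlet_tail_density_eq_kernel[OF n] using C
    by (intro nn_integral_cong ennreal_mult) (auto simp: dirichlet_kernel_nonneg)
  also have "\<dots> = ennreal ?C * (\<integral>\<^sup>+ mu. ennreal (dirichlet_kernel {1..<n} b (b 0) 1 mu) \<partial>lborel_PiM {1..<n})"
    by (rule nn_integral_cmult) measurable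
  also have "\<dots> = ennreal ?C * ennreal ((\<Prod>k\<in>{1..<n}. Gamma (b k)) * Gamma (b 0) / Gamma (sum b {1..<n} + b 0))"
    using b n by (subst nn_integral_dirichlet_kernel) auto
  also have "\<dots> = ennreal (?C * ((\<Prod>k\<in>{1..<n}. Gamma (b k)) * Gamma (b 0) / Gamma (sum b {1..<n} + b 0)))"
    by (rule ennreal_mult[symmetric]) (use C P G in auto)
  also have "?C * ((\<Prod>k\<in>{1..<n}. Gamma (b k)) * Gamma (b 0) / Gamma (sum b {1..<n} + b 0)) = 1"
  proof -
    have "Gamma (b k) \<noteq> 0" if "k < n" for k
      using b that Gamma_real_pos[of "b k"] by (metis order_less_irrefl)
    then show ?thesis using C P G unfolding n0 by (auto simp: add.commute)
  qed
  finally show ?thesis by simp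
qed

lemma prob_space_dirichlet:
  assumes "n \<ge> 1" "\<forall>k<n. 0 < b k"
  shows "prob_space (dirichlet n b)"
  unfolding dirichlet_eq_distr_density
proof (rule prob_space.prob_space_distr)
  let ?D = "density (lborel_PiM {1..<n}) (\<lambda>mu. ennreal (dirichlet_tail_density n b mu))"
  have "emeasure ?D (space ?D)
      = (\<integral>\<^sup>+ mu. ennreal (dirichlet_tail_density n b mu) * indicator (space ?D) mu \<partial>lborel_PiM {1..<n})"
    by (subst emeasure_density) auto
  also have "\<dots> = 1"
    by (subst nn_integral_dirichlet_tail_density[OF assms, symmetric]) (auto intro!: nn_integral_cong)
  finally show "prob_space ?D" ..
qed measurable

lemma AE_dirichlet_std_simplex:
  assumes "n \<ge> 1"
  shows "AE lam in dirichlet n b. lam \<in> std_simplex n"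
proof -
  have "AE mu in density (lborel_PiM {1..<n}) (\<lambda>mu. ennreal (dirichlet_tail_density n b mu)).
          dir_complete n mu \<in> std_simplex n"
    using dir_complete_in_std_simplex[OF assms]
    by (subst AE_density[OF borel_measurable_dirichlet_tail_density[THEN measurable_compose, OF measurable_ennreal]])
       (auto simp: dirichlet_tail_density_def indicator_def)

  then show ?thesis
    unfolding dirichlet_eq_distr_density by (subst AE_distr_iff) auto
qed

lemma borel_measurable_dirichlet_iff:
  "f \<in> borel_measurable (dirichlet n b) \<longleftrightarrow> f \<in> borel_measurable (lborel_PiM {..<n})"
  by (simp add: measurable_cong_sets[OF sets_dirichlet refl])

lemma integrable_dirichlet_bounded:
  fixes g :: "(nat \<Rightarrow> real) \<Rightarrow> real"
  assumes "n \<ge> 1" "\<forall>k<n. 0 < b k" and g: "g \<in> borel_measurable (lborel_PiM {..<n})"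
    and B: "\<forall>lam\<in>std_simplex n. \<bar>g lam\<bar> \<le> B"
  shows "integrable (dirichlet n b) g"
proof -
  interpret prob_space "dirichlet n b" using assms(1,2) by (rule prob_space_dirichlet)
  show ?thesis
    using AE_dirichlet_std_simplex[OF assms(1), of b] B g
    by (intro integrable_const_bound[where B=B]) (auto elim!: eventually_mono simp: borel_measurable_dirichlet_iff)
qed

lemma integral_dirichlet_cong:
  fixes f g :: "(nat \<Rightarrow> real) \<Rightarrow> real"
  assumes "n \<ge> 1" "f \<in> borel_measurable (lborel_PiM {..<n})" "g \<in> borel_measurable (lborel_PiM {..<n})"
    and "\<And>lam. lam \<in> std_simplex n \<Longrightarrow> f lam = g lam"
  shows "integral\<^sup>L (dirichlet n b) f = integral\<^sup>L (dirichlet n b) g"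
  using AE_dirichlet_std_simplex[OF assms(1), of b] assms(2-4)
  by (intro integral_cong_AE) (auto elim!: eventually_mono simp: borel_measurable_dirichlet_iff)

lemma integral_dirichlet_const:
  assumes "n \<ge> 1" "\<forall>k<n. 0 < b k"
  shows "integral\<^sup>L (dirichlet n b) (\<lambda>_. c) = (c :: real)"
proof -
  interpret prob_space "dirichlet n b" using assms by (rule prob_space_dirichlet)
  show ?thesis by (simp add: prob_space)
qed

lemma integrable_dirichlet_const:
  assumes "n \<ge> 1" "\<forall>k<n. 0 < b k"
  shows "integrable (dirichlet n b) (\<lambda>_. c::real)"
proof -
  interpret prob_space "dirichlet n b" using assms by (rule prob_space_dirichlet)
  show ?thesis by simp
qed

lemma integral_dirichlet_eq_tail_integral:
  fixes g :: "(nat \<Rightarrow> real) \<Rightarrow> real"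
  assumes "n \<ge> 1" "\<forall>k<n. 0 < b k" and g: "g \<in> borel_measurable (lborel_PiM {..<n})"
  shows "integral\<^sup>L (dirichlet n b) g
       = (\<integral> mu. dirichlet_tail_density n b mu * g (dir_complete n mu) \<partial>lborel_PiM {1..<n})"
proof -
  have "integral\<^sup>L (dirichlet n b) g
      = integral\<^sup>L (density (lborel_PiM {1..<n}) (\<lambda>mu. ennreal (dirichlet_tail_density n b mu)))
          (\<lambda>mu. g (dir_complete n mu))"
    unfolding dirichlet_eq_distr_density by (rule integral_distr) (simp_all add: g)
  also have "\<dots> = (\<integral> mu. dirichlet_tail_density n b mu *\<^sub>R g (dir_complete n mu) \<partial>lborel_PiM {1..<n})"
    by (rule integral_density) (use g dirichlet_tail_density_nonneg[OF assms(1,2)] in auto)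
  finally show ?thesis by simp
qed

lemma dirichlet_density_size_bias:
  fixes b lam :: "nat \<Rightarrow> real"
  assumes l: "l < n" and b: "\<forall>k<n. 0 < b k" and lam: "lam l > 0"
  shows "lam l * dirichlet_density n b lam
       = b l / (\<Sum>k<n. b k) * dirichlet_density n (b(l := b l + 1)) lam"
proof -
  let ?b' = "b(l := b l + 1)" and ?R = "{..<n} - {l}"
  have lA: "l \<in> {..<n}" using l by simp
  have bl: "b l > 0" using b l by simp
  have S: "sum b {..<n} > 0" using b l by (intro sum_pos) auto
  have sum_b': "sum ?b' {..<n} = sum b {..<n} + 1"
    using sum.remove[OF _ lA, of ?b'] sum.remove[OF _ lA, of b] sum.cong[of ?R ?R ?b' b] by auto
  have "Gamma (b l + 1) = b l * Gamma (b l)"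
    using bl by (intro Gamma_plus1) auto
  then have Gamma_b': "(\<Prod>k<n. Gamma (?b' k)) = b l * Gamma (b l) * (\<Prod>k\<in>?R. Gamma (b k))"
    using prod.remove[OF _ lA, of "\<lambda>k. Gamma (?b' k)"]
      prod.cong[of ?R ?R "\<lambda>k. Gamma (?b' k)" "\<lambda>k. Gamma (b k)"]
    by auto
  have Gamma_b: "(\<Prod>k<n. Gamma (b k)) = Gamma (b l) * (\<Prod>k\<in>?R. Gamma (b k))"
    using prod.remove[OF _ lA, of "\<lambda>k. Gamma (b k)"] by auto
  have pow_b': "(\<Prod>k<n. lam k powr (?b' k - 1)) = lam l * lam l powr (b l - 1) * (\<Prod>k\<in>?R. lam k powr (b k - 1))"
    using prod.remove[OF _ lA, of "\<lambda>k. lam k powr (?b' k - 1)"] lam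
      prod.cong[of ?R ?R "\<lambda>k. lam k powr (?b' k - 1)" "\<lambda>k. lam k powr (b k - 1)"]
    by (auto simp: powr_add[of _ "b l - 1" 1, simplified])
  have pow_b: "(\<Prod>k<n. lam k powr (b k - 1)) = lam l powr (b l - 1) * (\<Prod>k\<in>?R. lam k powr (b k - 1))"
    using prod.remove[OF _ lA, of "\<lambda>k. lam k powr (b k - 1)"] by auto
  have GS: "Gamma (sum b {..<n} + 1) = sum b {..<n} * Gamma (sum b {..<n})"
    using S by (intro Gamma_plus1) auto
  have "(\<Prod>k\<in>?R. Gamma (b k)) > 0" "Gamma (b l) > 0" using b l by (auto intro!: prod_pos)
  then show ?thesis
    unfolding dirichlet_density_def sum_b' Gamma_b' Gamma_b pow_b' pow_b GS
    using S bl by (simp add: field_simps)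
qed

lemma integral_dirichlet_size_biased:
  fixes g :: "(nat \<Rightarrow> real) \<Rightarrow> real"
  assumes n: "n \<ge> 1" and b: "\<forall>k<n. 0 < b k" and l: "l < n"
    and g: "g \<in> borel_measurable (lborel_PiM {..<n})"
  shows "(\<integral>lam. lam l * g lam \<partial>dirichlet n b)
       = b l / (\<Sum>k<n. b k) * (\<integral>lam. g lam \<partial>dirichlet n (b(l := b l + 1)))"
proof -
  let ?b' = "b(l := b l + 1)" and ?F = "dirichlet_tail_density n"
  have b': "\<forall>k<n. 0 < ?b' k" using b by auto
  have gl: "(\<lambda>lam. lam l * g lam) \<in> borel_measurable (lborel_PiM {..<n})"
    using l g by (intro borel_measurable_times measurable_component_lborel) auto
  have pointwise: "?F b mu * (dir_complete n mu l * g (dir_complete n mu))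
      = b l / (\<Sum>k<n. b k) * (?F ?b' mu * g (dir_complete n mu))" for mu
  proof (cases "mu \<in> open_corner_simplex {1..<n} 1")
    case True
    let ?lam = "dir_complete n mu"
    have "?lam l > 0" using True dir_complete_pos_iff[OF n] l by blast
    then have "?lam l * dirichlet_density n b ?lam = b l / (\<Sum>k<n. b k) * dirichlet_density n ?b' ?lam"
      by (rule dirichlet_density_size_bias[OF l b])
    then have "dirichlet_density n b ?lam * (?lam l * g ?lam)
        = b l / (\<Sum>k<n. b k) * (dirichlet_density n ?b' ?lam * g ?lam)"
      by (metis mult.assoc mult.left_commute)
    then show ?thesis
      using True unfolding dirichlet_tail_density_def by simp
  next
    case False
    then show ?thesis by (simp add: dirichlet_tail_density_def)
  qed
  have "(\<integral>lam. lam l * g lam \<partial>dirichlet n b)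
      = (\<integral>mu. b l / (\<Sum>k<n. b k) * (?F ?b' mu * g (dir_complete n mu)) \<partial>lborel_PiM {1..<n})"
    unfolding integral_dirichlet_eq_tail_integral[OF n b gl] pointwise[symmetric]
    by (simp add: mult.assoc)
  also have "\<dots> = b l / (\<Sum>k<n. b k) * (\<integral>lam. g lam \<partial>dirichlet n ?b')"
    unfolding integral_dirichlet_eq_tail_integral[OF n b' g] by (rule integral_mult_right_zero)
  finally show ?thesis .
qed

section \<open>Permuting the coordinates of the Dirichlet distribution\<close>

definition permute_coords :: "nat set \<Rightarrow> (nat \<Rightarrow> nat) \<Rightarrow> (nat \<Rightarrow> 'a) \<Rightarrow> nat \<Rightarrow> 'a" where
  "permute_coords I s mu = restrict (mu \<circ> s) I"

lemma permute_coords_apply [simp]: "k \<in> I \<Longrightarrow> permute_coords I s mu k = mu (s k)"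
  by (simp add: permute_coords_def)

lemma permute_coords_comp:
  assumes "s' \<in> I \<rightarrow> I"
  shows "permute_coords I s' (permute_coords I s mu) = permute_coords I (s \<circ> s') mu"
  using assms by (auto simp: permute_coords_def fun_eq_iff)

lemma measurable_permute_coords:
  "s \<in> I \<rightarrow> I \<Longrightarrow> permute_coords I s \<in> measurable (lborel_PiM I) (lborel_PiM I)"
  unfolding permute_coords_def
  by (rule measurable_PiM_single') (auto intro!: measurable_component_lborel simp: space_PiM)

lemma distr_lborel_PiM_permute_coords:
  assumes I: "finite I" and s: "bij_betw s I I"
  shows "distr (lborel_PiM I) (lborel_PiM I) (permute_coords I s) = lborel_PiM I"
proof -
  interpret product_sigma_finite "\<lambda>_::nat. lborel :: real measure" by unfold_locales
  show ?thesis
  proof (rule PiM_eqI[OF I])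
  let ?s' = "inv_into I s"
  have sm: "s \<in> I \<rightarrow> I" using s by (auto simp: bij_betw_def)
  have s': "bij_betw ?s' I I" using s by (rule bij_betw_inv_into)
  fix A :: "nat \<Rightarrow> real set" assume A: "\<And>i. i \<in> I \<Longrightarrow> A i \<in> sets lborel"
  have PA: "PiE I A \<in> sets (lborel_PiM I)" using A by (auto intro!: sets_PiM_I_finite I)
  have "permute_coords I s -` PiE I A \<inter> space (lborel_PiM I) = PiE I (\<lambda>j. A (?s' j))"
  proof (intro set_eqI iffI)
    fix mu assume "mu \<in> permute_coords I s -` PiE I A \<inter> space (lborel_PiM I)"
    then have a: "\<forall>i\<in>I. mu (s i) \<in> A i" and e: "mu \<in> extensional I"
      by (auto simp: space_PiM PiE_def Pi_iff)
    show "mu \<in> PiE I (\<lambda>j. A (?s' j))"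
    proof (rule PiE_I)
      fix j assume j: "j \<in> I"
      then have "?s' j \<in> I" "s (?s' j) = j"
        using s s' by (auto simp: bij_betw_def bij_betw_inv_into_right)
      then show "mu j \<in> A (?s' j)" using a by metis
    qed (use e in \<open>auto simp: extensional_def\<close>)
  next
    fix mu assume mu: "mu \<in> PiE I (\<lambda>j. A (?s' j))"
    have "mu (s i) \<in> A i" if i: "i \<in> I" for i
      using mu i sm s by (auto simp: bij_betw_inv_into_left dest!: PiE_mem[of mu I _ "s i"])
    then show "mu \<in> permute_coords I s -` PiE I A \<inter> space (lborel_PiM I)"
      using mu by (auto simp: space_PiM PiE_def permute_coords_def)
  qed
  then have "emeasure (distr (lborel_PiM I) (lborel_PiM I) (permute_coords I s)) (PiE I A)
      = emeasure (lborel_PiM I) (PiE I (\<lambda>j. A (?s' j)))"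
    using emeasure_distr[OF measurable_permute_coords[OF sm] PA] by simp
  also have "\<dots> = (\<Prod>j\<in>I. emeasure lborel (A (?s' j)))"
    using A s' I by (subst emeasure_PiM) (auto simp: bij_betw_def)
  also have "\<dots> = (\<Prod>i\<in>I. emeasure lborel (A i))"
    by (rule prod.reindex_bij_betw[OF s', of "\<lambda>i. emeasure lborel (A i)"])
  finally show "emeasure (distr (lborel_PiM I) (lborel_PiM I) (permute_coords I s)) (PiE I A)
      = (\<Prod>i\<in>I. emeasure lborel (A i))" .
qed simp
qed

lemma bij_betw_permute_coords_PiE:
  assumes s: "bij_betw s I I"
  shows "bij_betw (permute_coords I s) (PiE I (\<lambda>_. B)) (PiE I (\<lambda>_. B))"
proof (rule bij_betwI[of _ _ _ "permute_coords I (inv_into I s)"])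
  have sm: "s \<in> I \<rightarrow> I" and sm': "inv_into I s \<in> I \<rightarrow> I"
    using s bij_betw_inv_into[OF s] by (auto simp: bij_betw_def)
  show "permute_coords I s \<in> PiE I (\<lambda>_. B) \<rightarrow> PiE I (\<lambda>_. B)"
    "permute_coords I (inv_into I s) \<in> PiE I (\<lambda>_. B) \<rightarrow> PiE I (\<lambda>_. B)"
    using sm sm' by (auto simp: permute_coords_def PiE_def Pi_def)
  fix i assume "i \<in> PiE I (\<lambda>_. B)"
  then show "permute_coords I (inv_into I s) (permute_coords I s i) = i"
    "permute_coords I s (permute_coords I (inv_into I s) i) = i"
    using s sm sm' by (auto simp: permute_coords_def fun_eq_iff PiE_def extensional_def Pi_def
        bij_betw_inv_into_left bij_betw_inv_into_right)
qed

text \<open>In tail coordinates, the transposition of the coordinates 0 and l of the simplex: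
  the new l-th coordinate is the old implicit coordinate 0.\<close>

definition tail_transpose :: "nat \<Rightarrow> nat \<Rightarrow> (nat \<Rightarrow> real) \<Rightarrow> nat \<Rightarrow> real" where
  "tail_transpose n l mu = mu(l := 1 - (\<Sum>k\<in>{1..<n}. mu k))"

lemma measurable_tail_transpose:
  "l \<in> {1..<n} \<Longrightarrow> tail_transpose n l \<in> measurable (lborel_PiM {1..<n}) (lborel_PiM {1..<n})"
  unfolding tail_transpose_def
  apply (rule measurable_PiM_single')
  subgoal for i
    by (cases "i = l")
       (auto intro!: measurable_component_lborel borel_measurable_diff borel_measurable_sum)
  by (auto simp: space_PiM PiE_def extensional_def)

lemma nn_integral_tail_transpose:
  assumes l: "l \<in> {1..<n}" and f: "f \<in> borel_measurable (lborel_PiM {1..<n})"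
  shows "(\<integral>\<^sup>+ mu. f (tail_transpose n l mu) \<partial>lborel_PiM {1..<n}) = (\<integral>\<^sup>+ mu. f mu \<partial>lborel_PiM {1..<n})"
proof -
  interpret product_sigma_finite "\<lambda>_::nat. lborel :: real measure" by unfold_locales
  let ?I = "{1..<n} - {l}"
  have ins: "{1..<n} = insert l ?I" using l by auto
  have fI: "finite ?I" "l \<notin> ?I" by auto
  have PiM_ins: "lborel_PiM (insert l ?I) = lborel_PiM {1..<n}" by (simp only: ins[symmetric])
  have fT: "(\<lambda>mu. f (tail_transpose n l mu)) \<in> borel_measurable (lborel_PiM (insert l ?I))"
    using measurable_comp[OF measurable_tail_transpose[OF l] f] by (simp only: PiM_ins comp_def)
  have f': "f \<in> borel_measurable (lborel_PiM (insert l ?I))"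
    using f by (simp only: PiM_ins)
  have fibre: "(\<integral>\<^sup>+ t. f (tail_transpose n l (mu(l := t))) \<partial>lborel) = (\<integral>\<^sup>+ t. f (mu(l := t)) \<partial>lborel)"
    if mu: "mu \<in> space (lborel_PiM ?I)" for mu
  proof -
    let ?s = "\<Sum>k\<in>?I. mu k"
    have "(\<lambda>t. f (mu(l := t))) \<in> borel_measurable lborel"
      using measurable_comp[OF measurable_component_update[OF mu fI(2)] f'] by (simp add: comp_def)
    moreover have "tail_transpose n l (mu(l := t)) = mu(l := (1 - ?s) + (-1) * t)" for t
    proof -
      have "(\<Sum>k\<in>{1..<n}. (mu(l := t)) k) = t + (\<Sum>k\<in>?I. (mu(l := t)) k)"
        using sum.remove[of "{1..<n}" l "mu(l := t)"] l by simp
      also have "(\<Sum>k\<in>?I. (mu(l := t)) k) = ?s" by (rule sum.cong) auto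
      finally show ?thesis unfolding tail_transpose_def by (simp add: algebra_simps)
    qed
    ultimately show ?thesis
      using nn_integral_real_affine[of "\<lambda>t. f (mu(l := t))" "-1" "1 - ?s"] by simp
  qed
  have "(\<integral>\<^sup>+ mu. f (tail_transpose n l mu) \<partial>lborel_PiM {1..<n})
      = (\<integral>\<^sup>+ mu. (\<integral>\<^sup>+ t. f (tail_transpose n l (mu(l := t))) \<partial>lborel) \<partial>lborel_PiM ?I)"
    unfolding PiM_ins[symmetric] by (rule product_nn_integral_insert[OF fI fT])
  also have "\<dots> = (\<integral>\<^sup>+ mu. (\<integral>\<^sup>+ t. f (mu(l := t)) \<partial>lborel) \<partial>lborel_PiM ?I)"
    by (rule nn_integral_cong) (rule fibre)
  also have "\<dots> = (\<integral>\<^sup>+ mu. f mu \<partial>lborel_PiM {1..<n})"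
    unfolding PiM_ins[symmetric] by (rule product_nn_integral_insert[OF fI f', symmetric])
  finally show ?thesis .
qed

lemma distr_tail_transpose:
  assumes l: "l \<in> {1..<n}"
  shows "distr (lborel_PiM {1..<n}) (lborel_PiM {1..<n}) (tail_transpose n l) = lborel_PiM {1..<n}"
proof (rule measure_eqI)
  fix A assume "A \<in> sets (distr (lborel_PiM {1..<n}) (lborel_PiM {1..<n}) (tail_transpose n l))"
  then have A: "A \<in> sets (lborel_PiM {1..<n})" by simp
  have "emeasure (distr (lborel_PiM {1..<n}) (lborel_PiM {1..<n}) (tail_transpose n l)) A
      = (\<integral>\<^sup>+ mu. indicator A mu \<partial>distr (lborel_PiM {1..<n}) (lborel_PiM {1..<n}) (tail_transpose n l))"
    using A by simp
  also have "\<dots> = (\<integral>\<^sup>+ mu. indicator A (tail_transpose n l mu) \<partial>lborel_PiM {1..<n})"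
    using A by (intro nn_integral_distr measurable_tail_transpose l) simp
  also have "\<dots> = (\<integral>\<^sup>+ mu. indicator A mu \<partial>lborel_PiM {1..<n})"
    using A by (intro nn_integral_tail_transpose l) simp
  also have "\<dots> = emeasure (lborel_PiM {1..<n}) A"
    using A by simp
  finally show "emeasure (distr (lborel_PiM {1..<n}) (lborel_PiM {1..<n}) (tail_transpose n l)) A
      = emeasure (lborel_PiM {1..<n}) A" .
qed simp

lemma dirichlet_density_permute:
  assumes s: "bij_betw s {..<n} {..<n}" and lam': "\<forall>k<n. lam' k = lam (s k)"
  shows "dirichlet_density n (b \<circ> s) lam' = dirichlet_density n b lam"
proof -
  have "(\<Prod>k<n. lam' k powr ((b \<circ> s) k - 1)) = (\<Prod>k<n. lam (s k) powr (b (s k) - 1))"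
    using lam' by (intro prod.cong) auto
  then show ?thesis
    unfolding dirichlet_density_def
    using sum.reindex_bij_betw[OF s, of b] prod.reindex_bij_betw[OF s, of "\<lambda>k. Gamma (b k)"]
      prod.reindex_bij_betw[OF s, of "\<lambda>k. lam k powr (b k - 1)"]
    by simp
qed

lemma dirichlet_tail_density_eq_if:
  "n \<ge> 1 \<Longrightarrow> dirichlet_tail_density n b mu =
     (if \<forall>k<n. 0 < dir_complete n mu k then dirichlet_density n b (dir_complete n mu) else 0)"
  by (simp add: dirichlet_tail_density_def dir_complete_pos_iff)

lemma dirichlet_cong:
  assumes "\<And>k. k < n \<Longrightarrow> b k = b' k"
  shows "dirichlet n b = dirichlet n b'"
proof -
  have "dirichlet_density n b = dirichlet_density n b'"
    using assms by (auto simp: fun_eq_iff dirichlet_density_def intro!: sum.cong prod.cong)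
  then show ?thesis unfolding dirichlet_def by simp
qed

lemma distr_dirichlet_permute_via_tail:
  assumes n: "n \<ge> 1"
    and T: "T \<in> measurable (lborel_PiM {1..<n}) (lborel_PiM {1..<n})"
    and T_preserving: "distr (lborel_PiM {1..<n}) (lborel_PiM {1..<n}) T = lborel_PiM {1..<n}"
    and s: "bij_betw s {..<n} {..<n}"
    and T_s: "\<And>mu. dir_complete n (T mu) = permute_coords {..<n} s (dir_complete n mu)"
  shows "distr (dirichlet n b) (lborel_PiM {..<n}) (permute_coords {..<n} s) = dirichlet n (b \<circ> s)"
proof -
  have sm: "s \<in> {..<n} \<rightarrow> {..<n}" using s by (auto simp: bij_betw_def)
  let ?D = "\<lambda>b. density (lborel_PiM {1..<n}) (\<lambda>mu. ennreal (dirichlet_tail_density n b mu))"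
  have density_T: "dirichlet_tail_density n (b \<circ> s) (T mu) = dirichlet_tail_density n b mu" for mu
  proof -
    have "(\<forall>k<n. 0 < dir_complete n mu (s k)) \<longleftrightarrow> (\<forall>k<n. 0 < dir_complete n mu k)"
      using s by (metis bij_betw_iff_bijections lessThan_iff)
    moreover have "dirichlet_density n (b \<circ> s) (permute_coords {..<n} s (dir_complete n mu))
        = dirichlet_density n b (dir_complete n mu)"
      by (rule dirichlet_density_permute[OF s]) simp
    ultimately show ?thesis
      unfolding dirichlet_tail_density_eq_if[OF n] T_s by auto
  qed
  have "distr (dirichlet n b) (lborel_PiM {..<n}) (permute_coords {..<n} s)
      = distr (?D b) (lborel_PiM {..<n}) (permute_coords {..<n} s \<circ> dir_complete n)"
    unfolding dirichlet_eq_distr_density by (rule distr_distr[OF measurable_permute_coords[OF sm]]) simp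
  also have "\<dots> = distr (?D b) (lborel_PiM {..<n}) (dir_complete n \<circ> T)"
    by (rule distr_cong) (auto simp: T_s)
  also have "\<dots> = distr (distr (?D b) (lborel_PiM {1..<n}) T) (lborel_PiM {..<n}) (dir_complete n)"
    using T by (intro distr_distr[symmetric]) auto
  also have "distr (?D b) (lborel_PiM {1..<n}) T = ?D (b \<circ> s)"
  proof -
    have "?D (b \<circ> s) = distr (density (lborel_PiM {1..<n})
        (\<lambda>mu. ennreal (dirichlet_tail_density n (b \<circ> s) (T mu)))) (lborel_PiM {1..<n}) T"
      by (subst T_preserving[symmetric], rule density_distr) (use T in auto)
    then show ?thesis by (simp add: density_T)
  qed
  finally show ?thesis by (simp only: dirichlet_eq_distr_density)
qed

lemma distr_dirichlet_permute_fix0: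
  assumes n: "n \<ge> 1" and s: "bij_betw s {..<n} {..<n}" and s0: "s 0 = 0"
  shows "distr (dirichlet n b) (lborel_PiM {..<n}) (permute_coords {..<n} s) = dirichlet n (b \<circ> s)"
proof -
  have "bij_betw s ({..<n} - {0}) ({..<n} - {0})"
    using s s0 n by (intro bij_betw_DiffI) (auto simp: bij_betw_def)
  moreover have "{..<n} - {0} = {1..<n}" by auto
  ultimately have s1: "bij_betw s {1..<n} {1..<n}" by simp
  then have s1m: "s \<in> {1..<n} \<rightarrow> {1..<n}" by (auto simp: bij_betw_def)
  show ?thesis
  proof (rule distr_dirichlet_permute_via_tail[OF n measurable_permute_coords[OF s1m]
        distr_lborel_PiM_permute_coords[OF _ s1] s])
    fix mu :: "nat \<Rightarrow> real"
    have sum: "(\<Sum>j\<in>{1..<n}. permute_coords {1..<n} s mu j) = (\<Sum>j\<in>{1..<n}. mu j)"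
      using sum.reindex_bij_betw[OF s1, of mu] by simp
    show "dir_complete n (permute_coords {1..<n} s mu) = permute_coords {..<n} s (dir_complete n mu)"
    proof
      fix k
      show "dir_complete n (permute_coords {1..<n} s mu) k = permute_coords {..<n} s (dir_complete n mu) k"
      proof (cases "k = 0")
        case True
        then show ?thesis using sum s0 n by (simp add: dir_complete_def)
      next
        case False
        then show ?thesis
          using funcset_mem[OF s1m, of k] by (cases "k < n") (auto simp: dir_complete_def permute_coords_def)
      qed
    qed
  qed simp
qed

lemma distr_dirichlet_transpose0:
  assumes n: "n \<ge> 1" and l: "l \<in> {1..<n}"
  shows "distr (dirichlet n b) (lborel_PiM {..<n}) (permute_coords {..<n} (Transposition.transpose 0 l))
       = dirichlet n (b \<circ> Transposition.transpose 0 l)"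
proof (rule distr_dirichlet_permute_via_tail[OF n measurable_tail_transpose[OF l] distr_tail_transpose[OF l]])
  show "bij_betw (Transposition.transpose 0 l) {..<n} {..<n}"
    using l by (intro bij_betw_byWitness[where f'="Transposition.transpose 0 l"])
      (auto simp: transpose_def)
  fix mu :: "nat \<Rightarrow> real"
  have "(\<Sum>j\<in>{1..<n}. mu j) = mu l + (\<Sum>j\<in>{1..<n} - {l}. mu j)"
    using sum.remove[of "{1..<n}" l mu] l by simp
  moreover have "(\<Sum>j\<in>{1..<n} - {l}. tail_transpose n l mu j) = (\<Sum>j\<in>{1..<n} - {l}. mu j)"
    by (rule sum.cong) (auto simp: tail_transpose_def)
  then have "(\<Sum>j\<in>{1..<n}. tail_transpose n l mu j)
      = tail_transpose n l mu l + (\<Sum>j\<in>{1..<n} - {l}. mu j)"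
    using sum.remove[of "{1..<n}" l "tail_transpose n l mu"] l by simp
  ultimately show "dir_complete n (tail_transpose n l mu)
      = permute_coords {..<n} (Transposition.transpose 0 l) (dir_complete n mu)"
    using l by (auto simp: dir_complete_def tail_transpose_def permute_coords_def transpose_def fun_eq_iff)
qed

theorem distr_dirichlet_permute:
  assumes n: "n \<ge> 1" and s: "bij_betw s {..<n} {..<n}"
  shows "distr (dirichlet n b) (lborel_PiM {..<n}) (permute_coords {..<n} s) = dirichlet n (b \<circ> s)"
proof (cases "s 0 = 0")
  case True
  then show ?thesis by (rule distr_dirichlet_permute_fix0[OF n s])
next
  case False
  let ?l = "s 0" 
  let ?t = "Transposition.transpose 0 ?l"
  have l: "?l \<in> {1..<n}" using False s n by (auto simp: bij_betw_def)
  have t: "bij_betw ?t {..<n} {..<n}"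
    using l by (intro bij_betw_byWitness[where f'="?t"]) (auto simp: transpose_def)
  have ts: "bij_betw (?t \<circ> s) {..<n} {..<n}" by (rule bij_betw_trans[OF s t])
  have ts0: "(?t \<circ> s) 0 = 0" by simp
  have tsm: "?t \<circ> s \<in> {..<n} \<rightarrow> {..<n}" using ts by (auto simp: bij_betw_def)
  have s_eq: "?t \<circ> (?t \<circ> s) = s" by (simp add: fun_eq_iff)
  have "distr (dirichlet n b) (lborel_PiM {..<n}) (permute_coords {..<n} s)
      = distr (dirichlet n b) (lborel_PiM {..<n}) (permute_coords {..<n} (?t \<circ> s) \<circ> permute_coords {..<n} ?t)"
    by (rule distr_cong) (simp_all add: permute_coords_comp[OF tsm] s_eq)
  also have "\<dots> = distr (distr (dirichlet n b) (lborel_PiM {..<n}) (permute_coords {..<n} ?t))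
      (lborel_PiM {..<n}) (permute_coords {..<n} (?t \<circ> s))"
    using bij_betw_imp_funcset[OF t] tsm
    by (intro distr_distr[symmetric]) (auto simp: borel_measurable_dirichlet_iff measurable_cong_sets[OF sets_dirichlet refl]
        intro: measurable_permute_coords)
  also have "\<dots> = dirichlet n (b \<circ> s)"
    unfolding distr_dirichlet_transpose0[OF n l] distr_dirichlet_permute_fix0[OF n ts ts0]
    by (simp add: comp_assoc s_eq)
  finally show ?thesis .
qed

lemma bij_betw_rotate:
  assumes l: "l < (n::nat)"
  shows "bij_betw (\<lambda>k. (l + k) mod n) {..<n} {..<n}"
proof (rule bij_betwI[of _ _ _ "\<lambda>k. (k + (n - l)) mod n"])
  fix k assume k: "k \<in> {..<n}"
  have "((l + k) mod n + (n - l)) mod n = (l + k + (n - l)) mod n" by (simp add: mod_add_left_eq)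
  also have "l + k + (n - l) = k + n" using l by simp
  finally show "((l + k) mod n + (n - l)) mod n = k" using k by simp
  have "(l + (k + (n - l)) mod n) mod n = (l + (k + (n - l))) mod n" by (simp add: mod_add_right_eq)
  also have "l + (k + (n - l)) = k + n" using l by simp
  finally show "(l + (k + (n - l)) mod n) mod n = k" using k by simp
qed (use l in auto)

lemma dirichlet_dir_shift:
  assumes l: "l < n"
  shows "dirichlet n (dir_shift n alpha l) = dirichlet n (alpha(l := alpha l + 1) \<circ> (\<lambda>k. (l + k) mod n))"
proof (rule dirichlet_cong)
  fix k assume k: "k < n"
  have "(l + k) mod n = l \<longleftrightarrow> k = 0"
  proof
    assume h: "(l + k) mod n = l"
    show "k = 0"
    proof (cases "l + k < n")
      case False
      then have "(l + k) mod n = l + k - n" using k l by (simp add: le_mod_geq)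
      then show ?thesis using h k by simp
    qed (use h in simp)
  qed (use l in simp)
  then show "dir_shift n alpha l k = (alpha(l := alpha l + 1) \<circ> (\<lambda>k. (l + k) mod n)) k"
    unfolding dir_shift_def by auto
qed

lemma integral_dirichlet_dir_shift:
  fixes H :: "(nat \<Rightarrow> real) \<Rightarrow> real"
  assumes l: "l < n" and H: "H \<in> borel_measurable (lborel_PiM {..<n})"
  shows "integral\<^sup>L (dirichlet n (dir_shift n alpha l)) H
       = (\<integral>mu. H (permute_coords {..<n} (\<lambda>k. (l + k) mod n) mu) \<partial>dirichlet n (alpha(l := alpha l + 1)))"
proof -
  have n: "n \<ge> 1" using l by simp
  note rot = bij_betw_rotate[OF l]
  have "dirichlet n (dir_shift n alpha l)
      = distr (dirichlet n (alpha(l := alpha l + 1))) (lborel_PiM {..<n}) (permute_coords {..<n} (\<lambda>k. (l + k) mod n))"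
    unfolding dirichlet_dir_shift[OF l] by (rule distr_dirichlet_permute[OF n rot, symmetric])
  then show ?thesis
    using bij_betw_imp_funcset[OF rot] H
    by (simp add: integral_distr measurable_permute_coords measurable_cong_sets[OF sets_dirichlet refl])
qed

lemma dir_shift_pos: "\<forall>k<n. 0 < alpha k \<Longrightarrow> l < n \<Longrightarrow> \<forall>k<n. 0 < dir_shift n alpha l k"
  by (auto simp: dir_shift_def add_pos_pos)

lemma tilde_expect_add:
  assumes "\<forall>l<n. integrable (dirichlet n (dir_shift n alpha l)) f"
    and "\<forall>l<n. integrable (dirichlet n (dir_shift n alpha l)) g"
  shows "tilde_expect n alpha (\<lambda>lam. f lam + g lam) = tilde_expect n alpha f + tilde_expect n alpha g"
  using assms by (simp add: tilde_expect_def distrib_left sum.distrib)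

lemma tilde_expect_cmult: "tilde_expect n alpha (\<lambda>lam. c * f lam) = c * tilde_expect n alpha f"
  by (simp add: tilde_expect_def sum_distrib_left algebra_simps)

lemma tilde_expect_const:
  assumes "n \<ge> 1" "\<forall>k<n. 0 < alpha k"
  shows "tilde_expect n alpha (\<lambda>_. c) = c"
proof -
  have A: "(\<Sum>i<n. alpha i) > 0" using assms by (intro sum_pos) (auto simp: lessThan_empty_iff)
  have "tilde_expect n alpha (\<lambda>_. c) = (\<Sum>l<n. alpha l / (\<Sum>i<n. alpha i) * c)"
    unfolding tilde_expect_def
    by (rule sum.cong) (simp_all only: lessThan_iff integral_dirichlet_const[OF assms(1) dir_shift_pos[OF assms(2)]])
  also have "\<dots> = c" using A by (simp flip: sum_distrib_right sum_divide_distrib)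
  finally show ?thesis .
qed

lemma tilde_expect_cong:
  assumes "n \<ge> 1" "f \<in> borel_measurable (lborel_PiM {..<n})" "g \<in> borel_measurable (lborel_PiM {..<n})"
    and "\<And>lam. lam \<in> std_simplex n \<Longrightarrow> f lam = g lam"
  shows "tilde_expect n alpha f = tilde_expect n alpha g"
  unfolding tilde_expect_def using integral_dirichlet_cong[OF assms] by simp

section \<open>Means over uniformly random index tuples\<close>

lemma sum_PiE_insert:
  fixes F :: "('a \<Rightarrow> 'b) \<Rightarrow> real"
  assumes a: "a \<notin> K"
  shows "(\<Sum>j\<in>PiE (insert a K) (\<lambda>_. B). F j) = (\<Sum>t\<in>B. \<Sum>j\<in>PiE K (\<lambda>_. B). F (j(a := t)))"
proof -
  have "(\<Sum>j\<in>PiE (insert a K) (\<lambda>_. B). F j) = (\<Sum>(t, j)\<in>B \<times> PiE K (\<lambda>_. B). F (j(a := t)))"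
    using a by (intro sum.reindex_bij_witness[of _ "\<lambda>(y,g). g(a := y)" "\<lambda>g. (g a, g(a := undefined))"])
       (auto simp: PiE_def extensional_def)
  also have "\<dots> = (\<Sum>t\<in>B. \<Sum>j\<in>PiE K (\<lambda>_. B). F (j(a := t)))"
    by (rule sum.cartesian_product[symmetric])
  finally show ?thesis .
qed

lemma sum_PiE_component:
  fixes phi :: "'b \<Rightarrow> real"
  assumes K: "finite K" and k: "k \<in> K"
  shows "(\<Sum>j\<in>PiE K (\<lambda>_. B). phi (j k)) = real (card B) ^ (card K - 1) * (\<Sum>t\<in>B. phi t)"
proof -
  have "K = insert k (K - {k})" using k by auto
  then have "(\<Sum>j\<in>PiE K (\<lambda>_. B). phi (j k)) = (\<Sum>t\<in>B. \<Sum>j\<in>PiE (K - {k}) (\<lambda>_. B). phi t)"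
    using sum_PiE_insert[where a=k and K="K - {k}" and B=B and F="\<lambda>j. phi (j k)"] by simp
  then show ?thesis using K k by (simp add: card_PiE sum_distrib_left)
qed

lemma sum_PiE_two_components:
  fixes psi :: "'b \<Rightarrow> 'b \<Rightarrow> real"
  assumes K: "finite K" and k: "k \<in> K" "k' \<in> K" "k \<noteq> k'"
  shows "(\<Sum>j\<in>PiE K (\<lambda>_. B). psi (j k) (j k'))
       = real (card B) ^ (card K - 2) * (\<Sum>t\<in>B. \<Sum>t'\<in>B. psi t t')"
proof -
  have "K = insert k (K - {k})" using k by auto
  then have "(\<Sum>j\<in>PiE K (\<lambda>_. B). psi (j k) (j k'))
      = (\<Sum>t\<in>B. \<Sum>j\<in>PiE (K - {k}) (\<lambda>_. B). psi t (j k'))"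
    using sum_PiE_insert[where a=k and K="K - {k}" and B=B and F="\<lambda>j. psi (j k) (j k')"] k by simp
  also have "\<dots> = (\<Sum>t\<in>B. real (card B) ^ (card (K - {k}) - 1) * (\<Sum>t'\<in>B. psi t t'))"
    using K k by (intro sum.cong refl sum_PiE_component) auto
  also have "card (K - {k}) - 1 = card K - 2" using K k(1) by simp
  finally show ?thesis by (simp add: sum_distrib_left)
qed

lemma mean_PiE_two_components:
  fixes psi :: "nat \<Rightarrow> nat \<Rightarrow> real"
  assumes K: "finite K" and k: "k \<in> K" "k' \<in> K" and m: "m > 0"
  shows "(\<Sum>j\<in>PiE K (\<lambda>_. {..<m}). psi (j k) (j k')) / real m ^ card K
       = (if k = k' then (\<Sum>t<m. psi t t) / real m else (\<Sum>t<m. \<Sum>t'<m. psi t t') / real m ^ 2)"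
proof (cases "k = k'")
  case True
  have "card K \<ge> 1" using K k by (auto simp: Suc_le_eq card_gt_0_iff)
  then have "real m ^ card K = real m ^ (card K - 1) * real m"
    by (metis Suc_diff_le diff_Suc_1 power_Suc2)
  then show ?thesis using True m sum_PiE_component[OF K k(1), of "\<lambda>t. psi t t" "{..<m}"] by simp
next
  case False
  have "card {k, k'} \<le> card K" using K k by (intro card_mono) auto
  then have "card K \<ge> 2" using False by simp
  then have "real m ^ card K = real m ^ (card K - 2) * real m ^ 2"
    by (metis le_add_diff_inverse2 power_add)
  then show ?thesis using False m by (simp add: sum_PiE_two_components[OF K k False])
qed

lemma mean_PiE_linear:
  fixes phi :: "nat \<Rightarrow> real"
  assumes K: "finite K" and m: "m > 0"
  shows "(\<Sum>j\<in>PiE K (\<lambda>_. {..<m}). \<Sum>k\<in>K. lam k * phi (j k)) / real m ^ card K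
       = (\<Sum>k\<in>K. lam k) * ((\<Sum>t<m. phi t) / real m)"
proof -
  have "(\<Sum>j\<in>PiE K (\<lambda>_. {..<m}). \<Sum>k\<in>K. lam k * phi (j k)) / real m ^ card K
      = (\<Sum>k\<in>K. lam k * ((\<Sum>j\<in>PiE K (\<lambda>_. {..<m}). phi (j k)) / real m ^ card K))"
    by (subst sum.swap) (simp add: sum_divide_distrib sum_distrib_left)
  also have "\<dots> = (\<Sum>k\<in>K. lam k * ((\<Sum>t<m. phi t) / real m))"
    using mean_PiE_two_components[OF K _ _ m, of _ _ "\<lambda>t _. phi t"] by (intro sum.cong refl) simp
  finally show ?thesis by (simp add: sum_distrib_right sum_divide_distrib)
qed

lemma mean_PiE_quadratic:
  fixes psi :: "nat \<Rightarrow> nat \<Rightarrow> real"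
  assumes K: "finite K" and m: "m > 0"
  shows "(\<Sum>j\<in>PiE K (\<lambda>_. {..<m}). \<Sum>k\<in>K. \<Sum>k'\<in>K. lam k * lam k' * psi (j k) (j k')) / real m ^ card K
       = (\<Sum>k\<in>K. lam k ^ 2) * ((\<Sum>t<m. psi t t) / real m)
         + ((\<Sum>k\<in>K. lam k) ^ 2 - (\<Sum>k\<in>K. lam k ^ 2)) * ((\<Sum>t<m. \<Sum>t'<m. psi t t') / real m ^ 2)"
proof -
  let ?A = "(\<Sum>t<m. psi t t) / real m" and ?B = "(\<Sum>t<m. \<Sum>t'<m. psi t t') / real m ^ 2"
  let ?P = "PiE K (\<lambda>_. {..<m})"
  have "(\<Sum>j\<in>?P. \<Sum>k\<in>K. \<Sum>k'\<in>K. lam k * lam k' * psi (j k) (j k')) / real m ^ card K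
      = (\<Sum>k\<in>K. \<Sum>k'\<in>K. lam k * lam k' * ((\<Sum>j\<in>?P. psi (j k) (j k')) / real m ^ card K))"
  proof -
    have "(\<Sum>j\<in>?P. \<Sum>k\<in>K. \<Sum>k'\<in>K. lam k * lam k' * psi (j k) (j k'))
        = (\<Sum>k\<in>K. \<Sum>k'\<in>K. \<Sum>j\<in>?P. lam k * lam k' * psi (j k) (j k'))"
      by (subst sum.swap) (intro sum.cong refl sum.swap)
    then show ?thesis by (simp add: sum_divide_distrib sum_distrib_left)
  qed
  also have "\<dots> = (\<Sum>k\<in>K. \<Sum>k'\<in>K. lam k * lam k' * ?B + (if k = k' then lam k * lam k' * (?A - ?B) else 0))"
    by (intro sum.cong refl) (simp add: mean_PiE_two_components[OF K _ _ m] algebra_simps)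
  also have "\<dots> = (\<Sum>k\<in>K. \<Sum>k'\<in>K. lam k * lam k' * ?B) + (\<Sum>k\<in>K. lam k ^ 2 * (?A - ?B))"
    using K by (simp add: sum.distrib power2_eq_square)
  also have "(\<Sum>k\<in>K. \<Sum>k'\<in>K. lam k * lam k' * c) = (\<Sum>k\<in>K. lam k) ^ 2 * c" for c :: real
    by (simp add: power2_eq_square sum_distrib_left sum_distrib_right algebra_simps)
  also have "(\<Sum>k\<in>K. lam k ^ 2 * (?A - ?B)) = (\<Sum>k\<in>K. lam k ^ 2) * (?A - ?B)"
    by (simp add: sum_distrib_right)
  finally show ?thesis by (simp add: algebra_simps)
qed

lemma abs_mean_PiE_le:
  fixes a :: "nat \<Rightarrow> (nat \<Rightarrow> nat) \<Rightarrow> real"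
  assumes m: "m > 0" and K: "finite K"
    and B: "\<And>i j. i < m \<Longrightarrow> j \<in> PiE K (\<lambda>_. {..<m}) \<Longrightarrow> \<bar>a i j\<bar> \<le> B"
  shows "\<bar>1 / real m * (\<Sum>i<m. 1 / real m ^ card K * (\<Sum>j\<in>PiE K (\<lambda>_. {..<m}). a i j))\<bar> \<le> B"
proof -
  have "\<bar>1 / real m ^ card K * (\<Sum>j\<in>PiE K (\<lambda>_. {..<m}). a i j)\<bar> \<le> B" if i: "i < m" for i
  proof -
    have "\<bar>\<Sum>j\<in>PiE K (\<lambda>_. {..<m}). a i j\<bar> \<le> (\<Sum>j\<in>PiE K (\<lambda>_. {..<m}). B)"
      using B[OF i] by (intro order.trans[OF sum_abs sum_mono]) auto
    also have "\<dots> = real m ^ card K * B" using K by (simp add: card_PiE)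
    finally
    show ?thesis using m by (simp add: abs_mult field_simps)
  qed
  then have "\<bar>\<Sum>i<m. 1 / real m ^ card K * (\<Sum>j\<in>PiE K (\<lambda>_. {..<m}). a i j)\<bar> \<le> (\<Sum>i<m. B)"
    by (intro order.trans[OF sum_abs sum_mono]) auto
  then show ?thesis using m by (simp add: abs_mult field_simps)
qed

lemma matrix_vector_mult_sum_scaleR:
  "(H::real^'p^'p) *v (\<Sum>k\<in>K. c k *\<^sub>R v k) = (\<Sum>k\<in>K. c k *\<^sub>R (H *v v k))"
  by (induction K rule: infinite_finite_induct)
     (auto simp: matrix_vector_right_distrib matrix_vector_mult_scaleR)

lemma matrix_sum_vector_mult: "(\<Sum>j\<in>J. M j) *v (z::real^'p) = (\<Sum>j\<in>J. M j *v z)"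
  by (induction J rule: infinite_finite_induct) (auto simp: matrix_vector_mult_add_rdistrib)

lemma outer_vector_mult: "outer u v *v z = (v \<bullet> z) *\<^sub>R u"
  by (simp add: outer_def matrix_vector_mult_def vec_eq_iff inner_vec_def sum_distrib_left algebra_simps)

lemma power2_sum_product: "(\<Sum>k\<in>K. (a k :: real))^2 = (\<Sum>k\<in>K. \<Sum>k'\<in>K. a k * a k')"
  by (simp add: power2_eq_square sum_product)

lemma mean_PiE_inner_mix:
  fixes w :: "nat \<Rightarrow> 'a::real_inner"
  assumes K: "finite K" and m: "m > 0"
  shows "(\<Sum>j\<in>PiE K (\<lambda>_. {..<m}). g \<bullet> (\<Sum>k\<in>K. lam k *\<^sub>R w (j k))) / real m ^ card K
       = (\<Sum>k\<in>K. lam k) * (g \<bullet> ((1 / real m) *\<^sub>R (\<Sum>t<m. w t)))"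
  using mean_PiE_linear[OF K m, of lam "\<lambda>t. g \<bullet> w t"] by (simp add: inner_sum_right)

lemma mean_PiE_quadratic_form_mix:
  fixes w :: "nat \<Rightarrow> real^'p" and H :: "real^'p^'p" and K :: "'k set"
  assumes K: "finite K" and m: "m > 0"
  defines "wbar \<equiv> (1 / real m) *\<^sub>R (\<Sum>t<m. w t)"
  shows "(\<Sum>j\<in>PiE K (\<lambda>_. {..<m}). (\<Sum>k\<in>K. lam k *\<^sub>R w (j k)) \<bullet> (H *v (\<Sum>k\<in>K. lam k *\<^sub>R w (j k))))
         / real m ^ card K
       = (\<Sum>k\<in>K. lam k ^ 2) * (1 / real m * (\<Sum>t<m. w t \<bullet> (H *v w t)))
         + ((\<Sum>k\<in>K. lam k)^2 - (\<Sum>k\<in>K. lam k ^ 2)) * (wbar \<bullet> (H *v wbar))"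
proof -
  have expand: "(\<Sum>k\<in>K. lam k *\<^sub>R w (j k)) \<bullet> (H *v (\<Sum>k\<in>K. lam k *\<^sub>R w (j k)))
      = (\<Sum>k\<in>K. \<Sum>k'\<in>K. lam k * lam k' * (w (j k) \<bullet> (H *v w (j k'))))" for j :: "'k \<Rightarrow> nat"
  proof -
    have "(\<Sum>k\<in>K. lam k *\<^sub>R w (j k)) \<bullet> (H *v (\<Sum>k\<in>K. lam k *\<^sub>R w (j k)))
       = (\<Sum>k\<in>K. \<Sum>k'\<in>K. lam k * (lam k' * (w (j k') \<bullet> (H *v w (j k)))))"
      unfolding matrix_vector_mult_sum_scaleR
      by (simp add: inner_sum_left inner_sum_right sum_distrib_left algebra_simps)
    also have "\<dots> = (\<Sum>k\<in>K. \<Sum>k'\<in>K. lam k * lam k' * (w (j k) \<bullet> (H *v w (j k'))))"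
      by (subst sum.swap) (simp add: algebra_simps)
    finally show ?thesis .
  qed
  have "H *v (\<Sum>t<m. w t) = (\<Sum>t<m. H *v w t)"
    using matrix_vector_mult_sum_scaleR[of H "\<lambda>_. 1" w "{..<m}"] by simp
  then have "wbar \<bullet> (H *v wbar) = (\<Sum>t<m. \<Sum>t'<m. w t \<bullet> (H *v w t')) / real m ^ 2"
    unfolding wbar_def
    by (simp add: matrix_vector_mult_scaleR inner_sum_left inner_sum_right sum_divide_distrib
        power2_eq_square) (subst sum.swap, rule refl)
  then show ?thesis
    unfolding expand using mean_PiE_quadratic[OF K m, of lam "\<lambda>t t'. w t \<bullet> (H *v w t')"] by simp
qed

lemma mean_PiE_second_order_poly:
  fixes w :: "nat \<Rightarrow> real^'p" and g :: "real^'p" and H :: "real^'p^'p" and K :: "nat set"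
    and lam :: "nat \<Rightarrow> real"
  assumes K: "finite K" and m: "m > 0"
  defines "wbar \<equiv> (1 / real m) *\<^sub>R (\<Sum>t<m. w t)"
  shows "1 / real m ^ card K * (\<Sum>j\<in>PiE K (\<lambda>_. {..<m}).
            (let d = (\<Sum>k\<in>K. lam k *\<^sub>R w (j k)) in
              c + a * (g \<bullet> d) + 1/2 * (b * (g \<bullet> d)^2 + a * (d \<bullet> (H *v d)))))
       = c + a * (\<Sum>k\<in>K. lam k) * (g \<bullet> wbar)
         + 1/2 * (b * ((\<Sum>k\<in>K. lam k ^ 2) * (1 / real m * (\<Sum>t<m. (g \<bullet> w t)^2))
                       + ((\<Sum>k\<in>K. lam k)^2 - (\<Sum>k\<in>K. lam k ^ 2)) * (g \<bullet> wbar)^2)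
                 + a * ((\<Sum>k\<in>K. lam k ^ 2) * (1 / real m * (\<Sum>t<m. w t \<bullet> (H *v w t)))
                       + ((\<Sum>k\<in>K. lam k)^2 - (\<Sum>k\<in>K. lam k ^ 2)) * (wbar \<bullet> (H *v wbar))))"
proof -
  let ?P = "PiE K (\<lambda>_. {..<m})" and ?M = "real m ^ card K"
  define d where "d j = (\<Sum>k\<in>K. lam k *\<^sub>R w (j k))" for j :: "nat \<Rightarrow> nat"
  have square: "(g \<bullet> v)^2 = v \<bullet> (outer g g *v v)" for v :: "real^'p"
    by (simp add: outer_vector_mult inner_commute power2_eq_square)
  have "(\<Sum>j\<in>?P. c + a * (g \<bullet> d j) + 1/2 * (b * (g \<bullet> d j)^2 + a * (d j \<bullet> (H *v d j))))
      = real (card ?P) * c + a * (\<Sum>j\<in>?P. g \<bullet> d j)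
        + 1/2 * (b * (\<Sum>j\<in>?P. (g \<bullet> d j)^2) + a * (\<Sum>j\<in>?P. d j \<bullet> (H *v d j)))"
    by (simp only: sum.distrib sum_distrib_left[symmetric] sum_constant)
  moreover have "real (card ?P) = ?M" using K by (simp add: card_PiE)
  moreover have "(M * c + a * SX + 1/2 * (b * SY + a * SZ)) / M = c + a * (SX / M) + 1/2 * (b * (SY / M) + a * (SZ / M))"
    if "M > 0" for M SX SY SZ :: real
    using that by (simp add: field_simps)
  ultimately have "(\<Sum>j\<in>?P. c + a * (g \<bullet> d j) + 1/2 * (b * (g \<bullet> d j)^2 + a * (d j \<bullet> (H *v d j)))) / ?M
      = c + a * ((\<Sum>j\<in>?P. g \<bullet> d j) / ?M) + 1/2 * (b * ((\<Sum>j\<in>?P. (g \<bullet> d j)^2) / ?M)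
          + a * ((\<Sum>j\<in>?P. d j \<bullet> (H *v d j)) / ?M))"
    using m by simp
  also have "\<dots> = c + a * (\<Sum>k\<in>K. lam k) * (g \<bullet> wbar)
         + 1/2 * (b * ((\<Sum>k\<in>K. lam k ^ 2) * (1 / real m * (\<Sum>t<m. (g \<bullet> w t)^2))
                       + ((\<Sum>k\<in>K. lam k)^2 - (\<Sum>k\<in>K. lam k ^ 2)) * (g \<bullet> wbar)^2)
                 + a * ((\<Sum>k\<in>K. lam k ^ 2) * (1 / real m * (\<Sum>t<m. w t \<bullet> (H *v w t)))
                       + ((\<Sum>k\<in>K. lam k)^2 - (\<Sum>k\<in>K. lam k ^ 2)) * (wbar \<bullet> (H *v wbar))))"
    unfolding d_def square mean_PiE_inner_mix[OF K m] mean_PiE_quadratic_form_mix[OF K m] wbar_def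
    by (simp only: mult.assoc)
  finally show ?thesis unfolding d_def Let_def by simp
qed

section \<open>Second-order Taylor expansion with Peano remainder\<close>

lemma taylor2_peano_gradient:
  fixes G :: "'a::real_inner \<Rightarrow> real"
  assumes G: "\<And>z. (G has_derivative (\<lambda>v. grad z \<bullet> v)) (at z)"
    and grad: "(grad has_derivative D) (at x0)" and e: "e > 0"
  shows "\<forall>\<^sub>F u in nhds 0. \<bar>G (x0 + u) - G x0 - grad x0 \<bullet> u - 1/2 * (u \<bullet> D u)\<bar> \<le> e * norm u ^ 2"
proof -
  have D: "bounded_linear D" using grad by (rule has_derivative_bounded_linear)
  have "\<exists>d>0. \<forall>z. norm (z - x0) < d \<longrightarrow> norm (grad z - grad x0 - D (z - x0)) \<le> e * norm (z - x0)"
    using grad e unfolding has_derivative_at_alt by simp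
  then obtain d where d: "d > 0"
    and dd0: "\<forall>z. norm (z - x0) < d \<longrightarrow> norm (grad z - grad x0 - D (z - x0)) \<le> e * norm (z - x0)"
    by blast
  have dd: "norm (grad (x0 + w) - grad x0 - D w) \<le> e * norm w" if "norm w < d" for w
    using dd0[rule_format, of "x0 + w"] that by simp
  have "\<bar>G (x0 + u) - G x0 - grad x0 \<bullet> u - 1/2 * (u \<bullet> D u)\<bar> \<le> e * norm u ^ 2"
    if u: "norm u < d" for u
  proof -
    define gam where "gam t = G (x0 + t *\<^sub>R u) - G x0 - t * (grad x0 \<bullet> u) - t^2 / 2 * (u \<bullet> D u)" for t
    define gam' where "gam' t = grad (x0 + t *\<^sub>R u) \<bullet> u - grad x0 \<bullet> u - t * (u \<bullet> D u)" for t
    have "(gam has_real_derivative gam' t) (at t)" for t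
    proof -
      have "((\<lambda>t. G (x0 + t *\<^sub>R u)) has_derivative (\<lambda>s. grad (x0 + t *\<^sub>R u) \<bullet> (s *\<^sub>R u))) (at t)"
        by (rule has_derivative_compose[OF _ G]) (auto intro!: derivative_eq_intros)
      then have "((\<lambda>t. G (x0 + t *\<^sub>R u)) has_real_derivative grad (x0 + t *\<^sub>R u) \<bullet> u) (at t)"
        unfolding has_field_derivative_def by (rule has_derivative_eq_rhs) (auto simp: fun_eq_iff)
      moreover have "((\<lambda>t. t * (grad x0 \<bullet> u)) has_real_derivative grad x0 \<bullet> u) (at t)"
        by (auto intro!: derivative_eq_intros)
      moreover have "((\<lambda>t. t^2 / 2 * (u \<bullet> D u)) has_real_derivative t * (u \<bullet> D u)) (at t)"
        by (auto intro!: derivative_eq_intros)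
      ultimately have "(gam has_real_derivative
          grad (x0 + t *\<^sub>R u) \<bullet> u - 0 - grad x0 \<bullet> u - t * (u \<bullet> D u)) (at t)"
        unfolding gam_def[abs_def] by (intro DERIV_diff DERIV_const)
      then show ?thesis by (simp add: gam'_def)
    qed
    then obtain z where z: "0 < z" "z < 1" and mvt: "gam 1 - gam 0 = gam' z"
      using MVT2[of 0 1 gam gam'] by auto
    have gam': "gam' z = (grad (x0 + z *\<^sub>R u) - grad x0 - D (z *\<^sub>R u)) \<bullet> u"
      by (simp add: gam'_def linear_scale[OF bounded_linear.linear[OF D]] inner_diff_left inner_commute[of u])
    have "z * norm u \<le> norm u" using z by (intro mult_left_le_one_le) auto
    then have "norm (z *\<^sub>R u) < d" using u z by simp
    then have "\<bar>gam' z\<bar> \<le> e * norm (z *\<^sub>R u) * norm u"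
      unfolding gam' by (intro order.trans[OF Cauchy_Schwarz_ineq2 mult_right_mono] dd) auto
    also have "\<dots> \<le> e * norm u ^ 2"
      using z e by (simp add: power2_eq_square mult_left_le_one_le mult.assoc mult_left_mono)
    finally show ?thesis using mvt by (simp add: gam_def)
  qed
  then show ?thesis
    unfolding eventually_nhds_metric dist_norm using d by auto
qed

lemma loss_taylor2_peano:
  fixes f :: "'t \<Rightarrow> real^'p \<Rightarrow> real"
  assumes f: "\<forall>z. (f theta has_derivative (\<lambda>v. gradf z \<bullet> v)) (at z)"
    and gradf: "(gradf has_derivative (\<lambda>v. hessf x0 *v v)) (at x0)"
    and h: "\<forall>t. (h has_real_derivative h' t) (at t)"
    and h': "(h' has_real_derivative h'' (f theta x0)) (at (f theta x0))"
    and e: "e > 0"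
  shows "\<forall>\<^sub>F u in nhds 0.
     \<bar>loss h f theta (x0 + u, yy)
      - (loss h f theta (x0, yy) + (h' (f theta x0) - yy) * (gradf x0 \<bullet> u)
         + 1/2 * (h'' (f theta x0) * (gradf x0 \<bullet> u)^2 + (h' (f theta x0) - yy) * (u \<bullet> (hessf x0 *v u))))\<bar>
     \<le> e * norm u ^ 2"
proof -
  let ?a = "h' (f theta x0) - yy" and ?b = "h'' (f theta x0)" and ?g = "gradf x0"
  let ?grad = "\<lambda>z. (h' (f theta z) - yy) *\<^sub>R gradf z"
  let ?D = "\<lambda>v. ?a *\<^sub>R (hessf x0 *v v) + (?b * (?g \<bullet> v)) *\<^sub>R ?g"
  have "((\<lambda>z. loss h f theta (z, yy)) has_derivative (\<lambda>v. ?grad z \<bullet> v)) (at z)" for z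
  proof -
    have "((\<lambda>z. h (f theta z)) has_derivative (\<lambda>v. h' (f theta z) * (gradf z \<bullet> v))) (at z)"
      using has_derivative_compose[OF f[rule_format] h[rule_format, unfolded has_field_derivative_def]]
      by (simp add: mult.commute)
    then show ?thesis
      unfolding loss_def fst_conv snd_conv
      by (auto intro!: derivative_eq_intros f[rule_format] simp: algebra_simps)
  qed
  moreover have "(?grad has_derivative ?D) (at x0)"
  proof -
    have "((\<lambda>z. h' (f theta z)) has_derivative (\<lambda>v. ?b * (?g \<bullet> v))) (at x0)"
      using has_derivative_compose[OF f[rule_format] h'[unfolded has_field_derivative_def]]
      by (simp add: mult.commute)
    from has_derivative_scaleR[OF has_derivative_diff[OF this has_derivative_const] gradf]
    show ?thesis by (simp add: algebra_simps)
  qed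
  ultimately have "\<forall>\<^sub>F u in nhds 0.
      \<bar>loss h f theta (x0 + u, yy) - loss h f theta (x0, yy) - ?grad x0 \<bullet> u - 1/2 * (u \<bullet> ?D u)\<bar> \<le> e * norm u ^ 2"
    by (rule taylor2_peano_gradient[OF _ _ e])
  then show ?thesis
    by (rule eventually_mono)
       (simp add: inner_commute[of _ ?g] power2_eq_square algebra_simps)
qed

lemma norm_sum_scaleR_le_sqrt:
  fixes w :: "nat \<Rightarrow> 'a::real_normed_vector"
  assumes K: "finite K" and W: "\<And>k. k \<in> K \<Longrightarrow> norm (w k) \<le> W"
  shows "norm (\<Sum>k\<in>K. lam k *\<^sub>R w k) \<le> real (card K) * W * sqrt (\<Sum>k\<in>K. lam k ^ 2)"
proof -
  have "\<bar>lam k\<bar> * norm (w k) \<le> sqrt (\<Sum>k\<in>K. lam k ^ 2) * W" if k: "k \<in> K" for k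
  proof -
    have "lam k ^ 2 \<le> (\<Sum>k\<in>K. lam k ^ 2)" using K k by (intro member_le_sum) auto
    then have "\<bar>lam k\<bar> \<le> sqrt (\<Sum>k\<in>K. lam k ^ 2)" by (simp add: real_le_rsqrt)
    then show ?thesis using W[OF k] by (intro mult_mono) (auto intro: sum_nonneg)
  qed
  then have "norm (\<Sum>k\<in>K. lam k *\<^sub>R w k) \<le> (\<Sum>k\<in>K. sqrt (\<Sum>k\<in>K. lam k ^ 2) * W)"
    by (intro order.trans[OF norm_sum sum_mono]) auto
  then show ?thesis by (simp add: algebra_simps)
qed

section \<open>The n-Mixup loss\<close>

lemma loss_label_convex_combination:
  assumes "(\<Sum>k\<in>K. lam k) = 1"
  shows "loss h f theta (v, \<Sum>k\<in>K. lam k * yk k) = (\<Sum>k\<in>K. lam k * loss h f theta (v, yk k))"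
proof -
  have "(\<Sum>k\<in>K. lam k * loss h f theta (v, yk k))
      = (\<Sum>k\<in>K. lam k * h (f theta v)) - (\<Sum>k\<in>K. lam k * yk k * f theta v)"
    unfolding loss_def by (simp add: sum_subtractf right_diff_distrib mult.assoc)
  also have "\<dots> = (\<Sum>k\<in>K. lam k) * h (f theta v) - (\<Sum>k\<in>K. lam k * yk k) * f theta v"
    by (simp add: sum_distrib_right)
  finally show ?thesis using assms unfolding loss_def by simp
qed

lemma norm_convex_combination_le:
  fixes v :: "nat \<Rightarrow> 'a::real_normed_vector"
  assumes lam: "lam \<in> std_simplex n" and v: "\<And>k. k < n \<Longrightarrow> norm (v k) \<le> R"
  shows "norm (\<Sum>k<n. lam k *\<^sub>R v k) \<le> R"
proof -
  have "norm (\<Sum>k<n. lam k *\<^sub>R v k) \<le> (\<Sum>k<n. lam k * R)"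
    using lam v by (intro order.trans[OF norm_sum sum_mono])
      (auto simp: std_simplex_def intro!: mult_left_mono)
  also have "\<dots> = R" using lam by (simp add: std_simplex_def flip: sum_distrib_right)
  finally show ?thesis .
qed

lemma borel_measurable_coord_combination [measurable]:
  fixes v :: "nat \<Rightarrow> 'a::{real_normed_vector, second_countable_topology}"
  assumes "K \<subseteq> I"
  shows "(\<lambda>lam. \<Sum>k\<in>K. lam k *\<^sub>R v k) \<in> borel_measurable (lborel_PiM I)"
  using assms by (intro borel_measurable_sum borel_measurable_scaleR measurable_component_lborel) auto

lemma bounded_on_cball:
  fixes F :: "'a::euclidean_space \<Rightarrow> real"
  assumes "continuous_on UNIV F"
  shows "\<exists>B. \<forall>v. norm v \<le> R \<longrightarrow> \<bar>F v\<bar> \<le> B"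
proof -
  have "bounded (F ` cball 0 R)"
    using assms by (intro compact_imp_bounded compact_continuous_image) (auto intro: continuous_on_subset)
  then obtain B where "\<forall>z\<in>F ` cball 0 R. norm z \<le> B" unfolding bounded_iff by blast
  then show ?thesis by (intro exI[of _ B]) auto
qed

locale nmixup =
  fixes n m :: nat and alpha :: "nat \<Rightarrow> real"
    and x :: "nat \<Rightarrow> real^'p" and y :: "nat \<Rightarrow> real"
    and f :: "'t \<Rightarrow> real^'p \<Rightarrow> real" and theta :: 't
    and gradf :: "real^'p \<Rightarrow> real^'p" and hessf :: "real^'p \<Rightarrow> real^'p^'p"
    and h h' h'' :: "real \<Rightarrow> real"
  assumes n_ge_1: "n \<ge> 1"
    and alpha_pos: "\<forall>k<n. alpha k > 0"
    and m_pos: "m > 0"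
    and f_grad: "\<forall>z. (f theta has_derivative (\<lambda>v. gradf z \<bullet> v)) (at z)"
    and f_hess: "\<forall>z. (gradf has_derivative (\<lambda>v. hessf z *v v)) (at z)"
    and h_d1: "\<forall>t. (h has_real_derivative h' t) (at t)"
    and h_d2: "\<forall>t. (h' has_real_derivative h'' t) (at t)"
begin

lemma continuous_on_loss: "continuous_on UNIV (loss h f theta)"
proof -
  have ch: "continuous_on UNIV h"
    using h_d1 by (intro continuous_at_imp_continuous_on) (auto intro: DERIV_isCont)
  have cf: "continuous_on UNIV (f theta)"
    using f_grad by (intro continuous_at_imp_continuous_on) (auto intro: has_derivative_continuous)
  have c1: "continuous_on UNIV (\<lambda>z::(real^'p) \<times> real. f theta (fst z))"
    by (rule continuous_on_compose2[OF cf continuous_on_fst]) auto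
  have c2: "continuous_on UNIV (\<lambda>z::(real^'p) \<times> real. h (f theta (fst z)))"
    by (rule continuous_on_compose2[OF ch c1]) auto
  show ?thesis
    unfolding loss_def[abs_def] using c1 c2 by (intro continuous_intros) auto
qed

lemma borel_measurable_loss [measurable]:
  assumes "V \<in> borel_measurable M" "Y \<in> borel_measurable M"
  shows "(\<lambda>z. loss h f theta (V z, Y z)) \<in> borel_measurable M"
  using borel_measurable_continuous_on[OF continuous_on_loss, of "\<lambda>z. (V z, Y z)"] assms by simp

lemma loss_mix_bounded:
  "\<exists>B. \<forall>lam\<in>std_simplex n. \<forall>i t. (\<forall>k<n. i k < m) \<longrightarrow> t < m \<longrightarrow>
      \<bar>loss h f theta (\<Sum>k<n. lam k *\<^sub>R x (i k), y t)\<bar> \<le> B"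
proof -
  define R where "R = (\<Sum>t<m. norm (x t) + \<bar>y t\<bar>)"
  have R: "norm (x t) \<le> R" "\<bar>y t\<bar> \<le> R" if "t < m" for t
  proof -
    have "norm (x t) + \<bar>y t\<bar> \<le> R"
      using that unfolding R_def by (intro member_le_sum) auto
    then show "norm (x t) \<le> R" "\<bar>y t\<bar> \<le> R" using norm_ge_zero[of "x t"] by linarith+
  qed
  obtain B where B: "\<And>z. norm z \<le> R + R \<Longrightarrow> \<bar>loss h f theta z\<bar> \<le> B"
    using bounded_on_cball[OF continuous_on_loss, of "R + R"] by blast
  have "\<bar>loss h f theta (\<Sum>k<n. lam k *\<^sub>R x (i k), y t)\<bar> \<le> B"
    if "lam \<in> std_simplex n" "\<forall>k<n. i k < m" "t < m" for lam i t
    using that R norm_convex_combination_le[of lam n "\<lambda>k. x (i k)" R]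
    by (intro B order.trans[OF norm_Pair_le] add_mono) auto
  then show ?thesis by blast
qed

lemma integrable_dirichlet_loss_mix:
  assumes b: "\<forall>k<n. 0 < b k" and i: "\<forall>k<n. i k < m" and t: "t < m"
  shows "integrable (dirichlet n b) (\<lambda>lam. loss h f theta (\<Sum>k<n. lam k *\<^sub>R x (i k), y t))"
proof -
  obtain B where "\<forall>lam\<in>std_simplex n. \<bar>loss h f theta (\<Sum>k<n. lam k *\<^sub>R x (i k), y t)\<bar> \<le> B"
    using loss_mix_bounded i t by blast
  then show ?thesis by (intro integrable_dirichlet_bounded[OF n_ge_1 b]) auto
qed

lemma integrable_dirichlet_weighted_loss_mix:
  assumes b: "\<forall>k<n. 0 < b k" and i: "\<forall>k<n. i k < m" and t: "t < m" and l: "l < n"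
  shows "integrable (dirichlet n b) (\<lambda>lam. lam l * loss h f theta (\<Sum>k<n. lam k *\<^sub>R x (i k), y t))"
proof -
  obtain B where B: "\<forall>lam\<in>std_simplex n. \<bar>loss h f theta (\<Sum>k<n. lam k *\<^sub>R x (i k), y t)\<bar> \<le> B"
    using loss_mix_bounded i t by blast
  have "\<bar>lam l * loss h f theta (\<Sum>k<n. lam k *\<^sub>R x (i k), y t)\<bar> \<le> B" if "lam \<in> std_simplex n" for lam
  proof -
    have "\<bar>lam l\<bar> * \<bar>loss h f theta (\<Sum>k<n. lam k *\<^sub>R x (i k), y t)\<bar>
        \<le> \<bar>loss h f theta (\<Sum>k<n. lam k *\<^sub>R x (i k), y t)\<bar>"
      using std_simplex_component_le_1[OF that l] by (intro mult_left_le_one_le) auto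
    moreover have "\<bar>loss h f theta (\<Sum>k<n. lam k *\<^sub>R x (i k), y t)\<bar> \<le> B" using B that by blast
    ultimately show ?thesis unfolding abs_mult by linarith
  qed
  then show ?thesis
    using l by (intro integrable_dirichlet_bounded[OF n_ge_1 b]) (auto intro!: measurable_component_lborel)
qed

definition anchored_mix_loss :: "(nat \<Rightarrow> real) \<Rightarrow> real" where
  "anchored_mix_loss lam = 1 / real m ^ n *
     (\<Sum>i\<in>PiE {..<n} (\<lambda>_. {..<m}). loss h f theta (\<Sum>k<n. lam k *\<^sub>R x (i k), y (i 0)))"

lemma borel_measurable_anchored_mix_loss [measurable]:
  "anchored_mix_loss \<in> borel_measurable (lborel_PiM {..<n})"
  unfolding anchored_mix_loss_def[abs_def] by measurable

lemma integral_mix_loss_size_biased: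
  assumes i: "\<forall>k<n. i k < m"
  shows "(\<integral>lam. loss h f theta (\<Sum>k<n. lam k *\<^sub>R x (i k), \<Sum>k<n. lam k * y (i k)) \<partial>dirichlet n alpha)
       = (\<Sum>l<n. alpha l / (\<Sum>k<n. alpha k) *
            (\<integral>lam. loss h f theta (\<Sum>k<n. lam k *\<^sub>R x (i k), y (i l)) \<partial>dirichlet n (alpha(l := alpha l + 1))))"
proof -
  let ?G = "\<lambda>l lam. loss h f theta (\<Sum>k<n. lam k *\<^sub>R x (i k), y (i l))"
  have "(\<integral>lam. loss h f theta (\<Sum>k<n. lam k *\<^sub>R x (i k), \<Sum>k<n. lam k * y (i k)) \<partial>dirichlet n alpha)
      = (\<integral>lam. (\<Sum>l<n. lam l * ?G l lam) \<partial>dirichlet n alpha)"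
    by (rule integral_dirichlet_cong[OF n_ge_1])
       (auto intro!: loss_label_convex_combination simp: std_simplex_def)
  also have "\<dots> = (\<Sum>l<n. \<integral>lam. lam l * ?G l lam \<partial>dirichlet n alpha)"
    using i integrable_dirichlet_weighted_loss_mix[OF alpha_pos i] by (intro Bochner_Integration.integral_sum) auto
  also have "\<dots> = (\<Sum>l<n. alpha l / (\<Sum>k<n. alpha k) * (\<integral>lam. ?G l lam \<partial>dirichlet n (alpha(l := alpha l + 1))))"
    by (intro sum.cong refl integral_dirichlet_size_biased[OF n_ge_1 alpha_pos]) auto
  finally show ?thesis .
qed

lemma anchored_mix_loss_rotate:
  assumes l: "l < n"
  shows "anchored_mix_loss (permute_coords {..<n} (\<lambda>k. (l + k) mod n) mu)
       = 1 / real m ^ n * (\<Sum>i\<in>PiE {..<n} (\<lambda>_. {..<m}). loss h f theta (\<Sum>k<n. mu k *\<^sub>R x (i k), y (i l)))"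
proof -
  let ?rot = "\<lambda>k. (l + k) mod n" and ?P = "PiE {..<n} (\<lambda>_. {..<m})"
  let ?g = "\<lambda>i. loss h f theta (\<Sum>k<n. mu (?rot k) *\<^sub>R x (i k), y (i 0))"
  have rot: "bij_betw ?rot {..<n} {..<n}" by (rule bij_betw_rotate[OF l])
  have mixed: "(\<Sum>k<n. mu (?rot k) *\<^sub>R x (permute_coords {..<n} ?rot i k)) = (\<Sum>k<n. mu k *\<^sub>R x (i k))"
    for i :: "nat \<Rightarrow> nat"
  proof -
    have "(\<Sum>k<n. mu (?rot k) *\<^sub>R x (permute_coords {..<n} ?rot i k)) = (\<Sum>k<n. mu (?rot k) *\<^sub>R x (i (?rot k)))"
      by (rule sum.cong) auto
    also have "\<dots> = (\<Sum>k<n. mu k *\<^sub>R x (i k))"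
      by (rule sum.reindex_bij_betw[OF rot])
    finally show ?thesis .
  qed
  have anchor: "permute_coords {..<n} ?rot i 0 = i l" for i :: "nat \<Rightarrow> nat"
    using l by simp
  have "(\<Sum>k<n. permute_coords {..<n} ?rot mu k *\<^sub>R x (i k)) = (\<Sum>k<n. mu (?rot k) *\<^sub>R x (i k))"
    for i :: "nat \<Rightarrow> nat"
    by (rule sum.cong) auto
  then have "anchored_mix_loss (permute_coords {..<n} ?rot mu) = 1 / real m ^ n * (\<Sum>i\<in>?P. ?g i)"
    unfolding anchored_mix_loss_def by (simp only:)
  also have "(\<Sum>i\<in>?P. ?g i) = (\<Sum>i\<in>?P. ?g (permute_coords {..<n} ?rot i))"
    by (rule sum.reindex_bij_betw[OF bij_betw_permute_coords_PiE[OF rot], symmetric])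
  also have "\<dots> = (\<Sum>i\<in>?P. loss h f theta (\<Sum>k<n. mu k *\<^sub>R x (i k), y (i l)))"
    by (simp only: mixed anchor)
  finally show ?thesis .
qed

lemma integral_anchored_mix_loss_dir_shift:
  assumes l: "l < n"
  shows "integral\<^sup>L (dirichlet n (dir_shift n alpha l)) anchored_mix_loss
       = 1 / real m ^ n * (\<Sum>i\<in>PiE {..<n} (\<lambda>_. {..<m}).
           \<integral>lam. loss h f theta (\<Sum>k<n. lam k *\<^sub>R x (i k), y (i l)) \<partial>dirichlet n (alpha(l := alpha l + 1)))"
proof -
  let ?P = "PiE {..<n} (\<lambda>_. {..<m})"
  let ?G = "\<lambda>i lam. loss h f theta (\<Sum>k<n. lam k *\<^sub>R x (i k), y (i l))"
  have "\<forall>k<n. 0 < (alpha(l := alpha l + 1)) k" using alpha_pos by auto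
  then have "(\<integral>mu. (\<Sum>i\<in>?P. ?G i mu) \<partial>dirichlet n (alpha(l := alpha l + 1)))
      = (\<Sum>i\<in>?P. \<integral>mu. ?G i mu \<partial>dirichlet n (alpha(l := alpha l + 1)))"
    using l by (intro Bochner_Integration.integral_sum) (auto intro!: integrable_dirichlet_loss_mix simp: PiE_def Pi_def)
  then show ?thesis
    by (simp add: integral_dirichlet_dir_shift[OF l] anchored_mix_loss_rotate[OF l])
qed

lemma nmix_loss_eq_tilde_expect: "nmix_loss n alpha m h f theta x y = tilde_expect n alpha anchored_mix_loss"
proof -
  let ?P = "PiE {..<n} (\<lambda>_. {..<m})"
  let ?I = "\<lambda>i l. \<integral>lam. loss h f theta (\<Sum>k<n. lam k *\<^sub>R x (i k), y (i l)) \<partial>dirichlet n (alpha(l := alpha l + 1))"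
  have "nmix_loss n alpha m h f theta x y
      = 1 / real m ^ n * (\<Sum>i\<in>?P. \<Sum>l<n. alpha l / (\<Sum>k<n. alpha k) * ?I i l)"
    unfolding nmix_loss_def by (intro arg_cong2[where f="(*)"] sum.cong refl integral_mix_loss_size_biased) auto
  also have "\<dots> = (\<Sum>l<n. alpha l / (\<Sum>k<n. alpha k) * (1 / real m ^ n * (\<Sum>i\<in>?P. ?I i l)))"
    by (subst sum.swap) (simp add: sum_distrib_left algebra_simps)
  also have "\<dots> = tilde_expect n alpha anchored_mix_loss"
    unfolding tilde_expect_def by (intro sum.cong refl) (simp add: integral_anchored_mix_loss_dir_shift)
  finally show ?thesis .
qed

definition mix_offset :: "(nat \<Rightarrow> real) \<Rightarrow> nat \<Rightarrow> (nat \<Rightarrow> nat) \<Rightarrow> real^'p" where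
  "mix_offset lam t j = (\<Sum>k\<in>{1..<n}. lam k *\<^sub>R (x (j k) - x t))"

definition taylor_loss :: "nat \<Rightarrow> real^'p \<Rightarrow> real" where
  "taylor_loss t u = loss h f theta (x t, y t) + (h' (f theta (x t)) - y t) * (gradf (x t) \<bullet> u)
     + 1/2 * (h'' (f theta (x t)) * (gradf (x t) \<bullet> u)^2 + (h' (f theta (x t)) - y t) * (u \<bullet> (hessf (x t) *v u)))"

definition first_order_term :: "nat \<Rightarrow> real" where
  "first_order_term t = (h' (f theta (x t)) - y t) * (gradf (x t) \<bullet> emp_mean_diff m x t)"

definition diagonal_term :: "nat \<Rightarrow> real" where
  "diagonal_term t = 1/2 * (h'' (f theta (x t)) *
       (gradf (x t) \<bullet> (((1 / real m) *\<^sub>R (\<Sum>j<m. outer (x j - x t) (x j - x t))) *v gradf (x t)))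
     + (h' (f theta (x t)) - y t) * (1 / real m * (\<Sum>j<m. (x j - x t) \<bullet> (hessf (x t) *v (x j - x t)))))"

definition cross_term :: "nat \<Rightarrow> real" where
  "cross_term t = 1/2 * (h'' (f theta (x t)) *
       (gradf (x t) \<bullet> (outer (emp_mean_diff m x t) (emp_mean_diff m x t) *v gradf (x t)))
     + (h' (f theta (x t)) - y t) * (emp_mean_diff m x t \<bullet> (hessf (x t) *v emp_mean_diff m x t)))"

definition first_order_coef :: real where
  "first_order_coef = 1 / real m * (\<Sum>t<m. first_order_term t)"

definition diagonal_coef :: real where
  "diagonal_coef = 1 / real m * (\<Sum>t<m. diagonal_term t)"

definition cross_coef :: real where
  "cross_coef = 1 / real m * (\<Sum>t<m. cross_term t)"

lemma mix_remainder_eq: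
  "mix_remainder n m h h' h'' f gradf hessf theta x y lam
   = 1 / real m * (\<Sum>t<m. 1 / real m ^ (n - 1) * (\<Sum>j\<in>PiE {1..<n} (\<lambda>_. {..<m}).
        loss h f theta (x t + mix_offset lam t j, y t) - taylor_loss t (mix_offset lam t j)))"
  unfolding mix_remainder_def Let_def mix_offset_def taylor_loss_def ..

lemma anchored_mix_loss_eq_offsets:
  assumes lam: "lam \<in> std_simplex n"
  shows "anchored_mix_loss lam = 1 / real m * (\<Sum>t<m. 1 / real m ^ (n - 1) *
           (\<Sum>j\<in>PiE {1..<n} (\<lambda>_. {..<m}). loss h f theta (x t + mix_offset lam t j, y t)))"
proof -
  have n0: "{..<n} = insert 0 {1..<n}" using n_ge_1 by auto
  have lam0: "lam 0 = 1 - (\<Sum>k\<in>{1..<n}. lam k)"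
    using lam n_ge_1 unfolding std_simplex_def n0 by simp
  have anchor: "(\<Sum>k<n. lam k *\<^sub>R x ((j(0 := t)) k)) = x t + mix_offset lam t j" for t j
  proof -
    have "(\<Sum>k\<in>{1..<n}. lam k *\<^sub>R x ((j(0 := t)) k)) = (\<Sum>k\<in>{1..<n}. lam k *\<^sub>R x (j k))"
      by (rule sum.cong) auto
    then have "(\<Sum>k<n. lam k *\<^sub>R x ((j(0 := t)) k)) = lam 0 *\<^sub>R x t + (\<Sum>k\<in>{1..<n}. lam k *\<^sub>R x (j k))"
      unfolding n0 by simp
    then show ?thesis
      unfolding mix_offset_def lam0
      by (simp add: sum_subtractf scaleR_sum_left[symmetric] algebra_simps)
  qed
  have "(\<Sum>i\<in>PiE {..<n} (\<lambda>_. {..<m}). loss h f theta (\<Sum>k<n. lam k *\<^sub>R x (i k), y (i 0)))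
      = (\<Sum>t<m. \<Sum>j\<in>PiE {1..<n} (\<lambda>_. {..<m}). loss h f theta (x t + mix_offset lam t j, y t))"
  proof -
    have zero_notin: "(0::nat) \<notin> {1..<n}" by simp
    have "PiE {..<n} (\<lambda>_. {..<m}) = PiE (insert 0 {1..<n}) (\<lambda>_. {..<m})" using n0 by simp
    then have "(\<Sum>i\<in>PiE {..<n} (\<lambda>_. {..<m}). loss h f theta (\<Sum>k<n. lam k *\<^sub>R x (i k), y (i 0)))
        = (\<Sum>t<m. \<Sum>j\<in>PiE {1..<n} (\<lambda>_. {..<m}).
             loss h f theta (\<Sum>k<n. lam k *\<^sub>R x ((j(0 := t)) k), y ((j(0 := t)) 0)))"
      by (simp only: sum_PiE_insert[where a=0 and K="{1..<n}", OF zero_notin])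
    then show ?thesis by (simp only: anchor fun_upd_same)
  qed
  moreover have "1 / real m ^ n * (\<Sum>t<m. S t) = 1 / real m * (\<Sum>t<m. 1 / real m ^ (n - 1) * S t)"
    for S :: "nat \<Rightarrow> real"
  proof -
    have "real m ^ n = real m * real m ^ (n - 1)"
      using n_ge_1 by (metis Suc_diff_le diff_Suc_1 power_Suc)
    then show ?thesis by (simp add: sum_distrib_left)
  qed
  ultimately show ?thesis
    unfolding anchored_mix_loss_def by (simp only:)
qed

lemma mean_taylor_loss:
  "1 / real m ^ (n - 1) * (\<Sum>j\<in>PiE {1..<n} (\<lambda>_. {..<m}). taylor_loss t (mix_offset lam t j))
   = loss h f theta (x t, y t) + (\<Sum>k\<in>{1..<n}. lam k) * first_order_term t
     + (\<Sum>k\<in>{1..<n}. lam k ^ 2) * diagonal_term t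
     + ((\<Sum>k\<in>{1..<n}. lam k)^2 - (\<Sum>k\<in>{1..<n}. lam k ^ 2)) * cross_term t"
proof -
  have second_moment: "gradf (x t) \<bullet> (((1 / real m) *\<^sub>R (\<Sum>j<m. outer (x j - x t) (x j - x t))) *v gradf (x t))
      = 1 / real m * (\<Sum>j<m. (gradf (x t) \<bullet> (x j - x t))^2)"
    by (simp add: scaleR_matrix_vector_assoc[symmetric] matrix_sum_vector_mult outer_vector_mult
        inner_sum_right inner_commute power2_eq_square)
  have mean_sq: "gradf (x t) \<bullet> (outer (emp_mean_diff m x t) (emp_mean_diff m x t) *v gradf (x t))
      = (gradf (x t) \<bullet> emp_mean_diff m x t)^2"
    by (simp add: outer_vector_mult inner_commute power2_eq_square)
  have "1 / real m ^ (n - 1) * (\<Sum>j\<in>PiE {1..<n} (\<lambda>_. {..<m}). taylor_loss t (mix_offset lam t j))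
      = loss h f theta (x t, y t)
        + (h' (f theta (x t)) - y t) * (\<Sum>k\<in>{1..<n}. lam k) * (gradf (x t) \<bullet> emp_mean_diff m x t)
        + 1/2 * (h'' (f theta (x t)) * ((\<Sum>k\<in>{1..<n}. lam k ^ 2) * (1 / real m * (\<Sum>s<m. (gradf (x t) \<bullet> (x s - x t))^2))
              + ((\<Sum>k\<in>{1..<n}. lam k)^2 - (\<Sum>k\<in>{1..<n}. lam k ^ 2)) * (gradf (x t) \<bullet> emp_mean_diff m x t)^2)
          + (h' (f theta (x t)) - y t) * ((\<Sum>k\<in>{1..<n}. lam k ^ 2) * (1 / real m * (\<Sum>s<m. (x s - x t) \<bullet> (hessf (x t) *v (x s - x t))))
              + ((\<Sum>k\<in>{1..<n}. lam k)^2 - (\<Sum>k\<in>{1..<n}. lam k ^ 2))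
                * (emp_mean_diff m x t \<bullet> (hessf (x t) *v emp_mean_diff m x t))))"
    using mean_PiE_second_order_poly[where K="{1..<n}" and w="\<lambda>s. x s - x t" and lam=lam
        and c="loss h f theta (x t, y t)" and a="h' (f theta (x t)) - y t" and g="gradf (x t)"
        and b="h'' (f theta (x t))" and H="hessf (x t)", OF finite_atLeastLessThan m_pos]
    by (simp only: taylor_loss_def mix_offset_def emp_mean_diff_def card_atLeastLessThan Let_def)
  also have "\<dots> = loss h f theta (x t, y t) + (\<Sum>k\<in>{1..<n}. lam k) * first_order_term t
     + (\<Sum>k\<in>{1..<n}. lam k ^ 2) * diagonal_term t
     + ((\<Sum>k\<in>{1..<n}. lam k)^2 - (\<Sum>k\<in>{1..<n}. lam k ^ 2)) * cross_term t"
  proof -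
    have "c + a * s * A1 + 1/2 * (b * (S2 * A2 + (s^2 - S2) * A1^2) + a * (S2 * A3 + (s^2 - S2) * A4))
        = c + s * (a * A1) + S2 * (1/2 * (b * A2 + a * A3)) + (s^2 - S2) * (1/2 * (b * A1^2 + a * A4))"
      for c a s A1 b S2 A2 A3 A4 :: real
      by (simp add: field_simps)
    then show ?thesis
      unfolding first_order_term_def diagonal_term_def cross_term_def second_moment mean_sq .
  qed
  finally show ?thesis .
qed

lemma anchored_mix_loss_expansion:
  assumes lam: "lam \<in> std_simplex n"
  shows "anchored_mix_loss lam = std_loss m h f theta x y
     + first_order_coef * (1 - lam 0) + diagonal_coef * (\<Sum>j\<in>{1..<n}. lam j ^ 2)
     + cross_coef * ((1 - lam 0) ^ 2 - (\<Sum>j\<in>{1..<n}. lam j ^ 2))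
     + mix_remainder n m h h' h'' f gradf hessf theta x y lam"
proof -
  have "{..<n} = insert 0 {1..<n}" using n_ge_1 by auto
  then have s: "(\<Sum>k\<in>{1..<n}. lam k) = 1 - lam 0"
    using lam by (simp add: std_simplex_def)
  have "anchored_mix_loss lam - mix_remainder n m h h' h'' f gradf hessf theta x y lam
      = 1 / real m * (\<Sum>t<m. 1 / real m ^ (n - 1) *
          (\<Sum>j\<in>PiE {1..<n} (\<lambda>_. {..<m}). taylor_loss t (mix_offset lam t j)))"
    unfolding anchored_mix_loss_eq_offsets[OF lam] mix_remainder_eq
    by (simp add: sum_subtractf right_diff_distrib)
  also have "\<dots> = 1 / real m * ((\<Sum>t<m. loss h f theta (x t, y t)) + (1 - lam 0) * (\<Sum>t<m. first_order_term t)
      + (\<Sum>j\<in>{1..<n}. lam j ^ 2) * (\<Sum>t<m. diagonal_term t)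
      + ((1 - lam 0) ^ 2 - (\<Sum>j\<in>{1..<n}. lam j ^ 2)) * (\<Sum>t<m. cross_term t))"
    unfolding mean_taylor_loss s by (simp add: sum.distrib sum_distrib_left)
  also have "\<dots> = std_loss m h f theta x y + first_order_coef * (1 - lam 0)
     + diagonal_coef * (\<Sum>j\<in>{1..<n}. lam j ^ 2) + cross_coef * ((1 - lam 0) ^ 2 - (\<Sum>j\<in>{1..<n}. lam j ^ 2))"
  proof -
    have "1 / M * (SL + s * SA + q * SD + r * SC) = 1 / M * SL + 1 / M * SA * s + 1 / M * SD * q + 1 / M * SC * r"
      for M SL SA SD SC s q r :: real
      by (simp add: algebra_simps)
    then show ?thesis unfolding std_loss_def first_order_coef_def diagonal_coef_def cross_coef_def .
  qed
  finally show ?thesis by (simp only: eq_diff_eq)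
qed

lemma anchored_mix_loss_bounded: "\<exists>B. \<forall>lam\<in>std_simplex n. \<bar>anchored_mix_loss lam\<bar> \<le> B"
proof -
  obtain B where B: "\<forall>lam\<in>std_simplex n. \<forall>i t. (\<forall>k<n. i k < m) \<longrightarrow> t < m \<longrightarrow>
      \<bar>loss h f theta (\<Sum>k<n. lam k *\<^sub>R x (i k), y t)\<bar> \<le> B"
    using loss_mix_bounded by blast
  have "\<bar>anchored_mix_loss lam\<bar> \<le> B" if lam: "lam \<in> std_simplex n" for lam
  proof -
    have "\<bar>\<Sum>i\<in>PiE {..<n} (\<lambda>_. {..<m}). loss h f theta (\<Sum>k<n. lam k *\<^sub>R x (i k), y (i 0))\<bar>
        \<le> (\<Sum>i\<in>PiE {..<n} (\<lambda>_. {..<m}). B)"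
      using B lam n_ge_1 by (intro order.trans[OF sum_abs sum_mono]) (auto simp: PiE_def Pi_def)
    also have "\<dots> = real m ^ n * B" by (simp add: card_PiE)
    finally show ?thesis using m_pos by (simp add: anchored_mix_loss_def abs_mult field_simps)
  qed
  then show ?thesis by blast
qed

lemma borel_measurable_mix_remainder [measurable]:
  "mix_remainder n m h h' h'' f gradf hessf theta x y \<in> borel_measurable (lborel_PiM {..<n})"
proof -
  have "(\<lambda>lam. hessf (x t) *v mix_offset lam t j) \<in> borel_measurable (lborel_PiM {..<n})" for t j
    unfolding mix_offset_def
    by (rule borel_measurable_continuous_on[OF matrix_vector_mult_linear_continuous_on]) measurable
  then show ?thesis
    unfolding mix_remainder_eq[abs_def] taylor_loss_def mix_offset_def by measurable
qed

lemma integrable_std_simplex_moments: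
  assumes b: "\<forall>k<n. 0 < b k"
  shows "integrable (dirichlet n b) (\<lambda>lam. 1 - lam 0)"
    and "integrable (dirichlet n b) (\<lambda>lam. \<Sum>j\<in>{1..<n}. lam j ^ 2)"
    and "integrable (dirichlet n b) (\<lambda>lam. (1 - lam 0) ^ 2 - (\<Sum>j\<in>{1..<n}. lam j ^ 2))"
proof -
  note meas = borel_measurable_diff borel_measurable_sum borel_measurable_power measurable_component_lborel
  note bounds = std_simplex_moment_bounds[OF _ n_ge_1]
  show "integrable (dirichlet n b) (\<lambda>lam. 1 - lam 0)"
    using bounds(1) n_ge_1 by (intro integrable_dirichlet_bounded[OF n_ge_1 b, where B=1]) (auto intro!: meas)
  show "integrable (dirichlet n b) (\<lambda>lam. \<Sum>j\<in>{1..<n}. lam j ^ 2)"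
    using bounds(2) by (intro integrable_dirichlet_bounded[OF n_ge_1 b, where B="real n"]) (auto intro!: meas)
  show "integrable (dirichlet n b) (\<lambda>lam. (1 - lam 0) ^ 2 - (\<Sum>j\<in>{1..<n}. lam j ^ 2))"
    using bounds(3) n_ge_1 by (intro integrable_dirichlet_bounded[OF n_ge_1 b, where B="1 + real n"]) (auto intro!: meas)
qed

lemma integrable_mix_remainder:
  assumes b: "\<forall>k<n. 0 < b k"
  shows "integrable (dirichlet n b) (mix_remainder n m h h' h'' f gradf hessf theta x y)"
proof -
  obtain B where B: "\<forall>lam\<in>std_simplex n. \<bar>anchored_mix_loss lam\<bar> \<le> B"
    using anchored_mix_loss_bounded by blast
  let ?B = "B + \<bar>std_loss m h f theta x y\<bar> + \<bar>first_order_coef\<bar> + \<bar>diagonal_coef\<bar> * real n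
    + \<bar>cross_coef\<bar> * (1 + real n)"
  have "\<bar>mix_remainder n m h h' h'' f gradf hessf theta x y lam\<bar> \<le> ?B" if lam: "lam \<in> std_simplex n" for lam
  proof -
    note bounds = std_simplex_moment_bounds[OF lam n_ge_1]
    have "\<bar>first_order_coef * (1 - lam 0)\<bar> \<le> \<bar>first_order_coef\<bar>"
      "\<bar>diagonal_coef * (\<Sum>j\<in>{1..<n}. lam j ^ 2)\<bar> \<le> \<bar>diagonal_coef\<bar> * real n"
      "\<bar>cross_coef * ((1 - lam 0) ^ 2 - (\<Sum>j\<in>{1..<n}. lam j ^ 2))\<bar> \<le> \<bar>cross_coef\<bar> * (1 + real n)"
      using bounds by (auto simp: abs_mult intro: mult_left_le mult_left_mono)
    then show ?thesis
      using anchored_mix_loss_expansion[OF lam] bspec[OF B lam] abs_ge_self[of "std_loss m h f theta x y"]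
        abs_ge_minus_self[of "std_loss m h f theta x y"]
      unfolding abs_le_iff by linarith
  qed
  then show ?thesis
    by (intro integrable_dirichlet_bounded[OF n_ge_1 b borel_measurable_mix_remainder, where B="?B"]) blast
qed

lemma tilde_expect_anchored_mix_loss:
  "tilde_expect n alpha anchored_mix_loss = std_loss m h f theta x y
     + first_order_coef * tilde_expect n alpha (\<lambda>lam. 1 - lam 0)
     + diagonal_coef * tilde_expect n alpha (\<lambda>lam. \<Sum>j\<in>{1..<n}. lam j ^ 2)
     + cross_coef * tilde_expect n alpha (\<lambda>lam. (1 - lam 0) ^ 2 - (\<Sum>j\<in>{1..<n}. lam j ^ 2))
     + tilde_expect n alpha (mix_remainder n m h h' h'' f gradf hessf theta x y)"
  (is "_ = ?R")
proof -
  let ?\<rho> = "mix_remainder n m h h' h'' f gradf hessf theta x y"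
  have b: "\<forall>k<n. 0 < dir_shift n alpha l k" if "l < n" for l
    using dir_shift_pos[OF alpha_pos that] .
  note int = integrable_std_simplex_moments[OF b] integrable_mix_remainder[OF b]
    integrable_dirichlet_const[OF n_ge_1 b]
  have "tilde_expect n alpha anchored_mix_loss = tilde_expect n alpha (\<lambda>lam. std_loss m h f theta x y
      + first_order_coef * (1 - lam 0) + diagonal_coef * (\<Sum>j\<in>{1..<n}. lam j ^ 2)
      + cross_coef * ((1 - lam 0) ^ 2 - (\<Sum>j\<in>{1..<n}. lam j ^ 2)) + ?\<rho> lam)"
    using n_ge_1
    by (intro tilde_expect_cong n_ge_1 anchored_mix_loss_expansion borel_measurable_anchored_mix_loss
        borel_measurable_add borel_measurable_times borel_measurable_const borel_measurable_diff
        borel_measurable_sum borel_measurable_power measurable_component_lborel borel_measurable_mix_remainder)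
       auto
  also have "\<dots> = ?R"
  proof -
    let ?E = "tilde_expect n alpha"
    let ?f1 = "\<lambda>lam::nat \<Rightarrow> real. 1 - lam 0"
    let ?f2 = "\<lambda>lam::nat \<Rightarrow> real. \<Sum>j\<in>{1..<n}. lam j ^ 2"
    let ?f3 = "\<lambda>lam::nat \<Rightarrow> real. (1 - lam 0) ^ 2 - (\<Sum>j\<in>{1..<n}. lam j ^ 2)"
    let ?c = "std_loss m h f theta x y"
    have "?E (\<lambda>lam. ?c + first_order_coef * ?f1 lam + diagonal_coef * ?f2 lam + cross_coef * ?f3 lam + ?\<rho> lam)
        = ?E (\<lambda>lam. ?c + first_order_coef * ?f1 lam + diagonal_coef * ?f2 lam + cross_coef * ?f3 lam) + ?E ?\<rho>"
      by (rule tilde_expect_add) (use int in auto)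
    moreover have "?E (\<lambda>lam. ?c + first_order_coef * ?f1 lam + diagonal_coef * ?f2 lam + cross_coef * ?f3 lam)
        = ?E (\<lambda>lam. ?c + first_order_coef * ?f1 lam + diagonal_coef * ?f2 lam) + ?E (\<lambda>lam. cross_coef * ?f3 lam)"
      by (rule tilde_expect_add) (use int in auto)
    moreover have "?E (\<lambda>lam. ?c + first_order_coef * ?f1 lam + diagonal_coef * ?f2 lam)
        = ?E (\<lambda>lam. ?c + first_order_coef * ?f1 lam) + ?E (\<lambda>lam. diagonal_coef * ?f2 lam)"
      by (rule tilde_expect_add) (use int in auto)
    moreover have "?E (\<lambda>lam. ?c + first_order_coef * ?f1 lam) = ?E (\<lambda>_. ?c) + ?E (\<lambda>lam. first_order_coef * ?f1 lam)"
      by (rule tilde_expect_add) (use int in auto)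
    ultimately show ?thesis
      by (simp only: tilde_expect_cmult tilde_expect_const[OF n_ge_1 alpha_pos])
  qed
  finally show ?thesis .
qed

lemma taylor_loss_remainder_uniform:
  assumes e: "e > 0"
  shows "\<exists>d>0. \<forall>t<m. \<forall>u. norm u < d \<longrightarrow>
           \<bar>loss h f theta (x t + u, y t) - taylor_loss t u\<bar> \<le> e * norm u ^ 2"
proof -
  have "\<forall>\<^sub>F u in nhds 0. \<forall>t\<in>{..<m}. \<bar>loss h f theta (x t + u, y t) - taylor_loss t u\<bar> \<le> e * norm u ^ 2"
    unfolding taylor_loss_def
    by (intro eventually_ball_finite ballI loss_taylor2_peano f_grad f_hess[rule_format] h_d1
        h_d2[rule_format] e) auto
  then show ?thesis unfolding eventually_nhds_metric dist_norm by auto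
qed

lemma norm_mix_offset_le:
  "\<exists>W\<ge>0. \<forall>lam t j. t < m \<longrightarrow> j \<in> PiE {1..<n} (\<lambda>_. {..<m}) \<longrightarrow>
     norm (mix_offset lam t j) \<le> W * sqrt (\<Sum>k\<in>{1..<n}. lam k ^ 2)"
proof -
  define R where "R = (\<Sum>t<m. norm (x t))"
  have R: "norm (x t) \<le> R" if "t < m" for t
    unfolding R_def using that by (intro member_le_sum) auto
  have "norm (mix_offset lam t j) \<le> real (n - 1) * (2 * R) * sqrt (\<Sum>k\<in>{1..<n}. lam k ^ 2)"
    if t: "t < m" and j: "j \<in> PiE {1..<n} (\<lambda>_. {..<m})" for lam t j
  proof -
    have "norm (x (j k) - x t) \<le> 2 * R" if "k \<in> {1..<n}" for k
    proof -
      have "j k < m" using j that by (auto simp: PiE_def Pi_def)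
      then show ?thesis using R[of "j k"] R[OF t] norm_triangle_ineq4[of "x (j k)" "x t"] by simp
    qed
    then show ?thesis
      unfolding mix_offset_def using norm_sum_scaleR_le_sqrt[of "{1..<n}" "\<lambda>k. x (j k) - x t" "2 * R" lam]
      by simp
  qed
  moreover have "real (n - 1) * (2 * R) \<ge> 0" unfolding R_def by (intro mult_nonneg_nonneg sum_nonneg) auto
  ultimately show ?thesis by blast
qed

lemma mix_remainder_little_o:
  "\<forall>e>0. \<exists>\<delta>>0. \<forall>lam. (\<forall>k<n. 0 \<le> lam k) \<and> (\<Sum>k<n. lam k) = 1 \<and> (\<Sum>k\<in>{1..<n}. lam k ^ 2) < \<delta>\<^sup>2
     \<longrightarrow> \<bar>mix_remainder n m h h' h'' f gradf hessf theta x y lam\<bar> \<le> e * (\<Sum>k\<in>{1..<n}. lam k ^ 2)"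
proof (intro allI impI)
  fix e :: real assume e: "e > 0"
  obtain W where W: "W \<ge> 0" and offset: "\<And>lam t j. t < m \<Longrightarrow> j \<in> PiE {1..<n} (\<lambda>_. {..<m}) \<Longrightarrow>
      norm (mix_offset lam t j) \<le> W * sqrt (\<Sum>k\<in>{1..<n}. lam k ^ 2)"
    using norm_mix_offset_le by blast
  define e' where "e' = e / (W\<^sup>2 + 1)"
  have W2: "W\<^sup>2 + 1 > 0" by (rule add_nonneg_pos) auto
  then have e': "e' > 0" unfolding e'_def using e by simp
  have eW: "e' * W\<^sup>2 \<le> e"
  proof -
    have "e' * W\<^sup>2 = e * (W\<^sup>2 / (W\<^sup>2 + 1))" unfolding e'_def by simp
    also have "\<dots> \<le> e * 1" using e W2 by (intro mult_left_mono) (auto simp: divide_le_eq_1)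
    finally show ?thesis by simp
  qed
  obtain d where d: "d > 0" and taylor: "\<forall>t<m. \<forall>u. norm u < d \<longrightarrow>
      \<bar>loss h f theta (x t + u, y t) - taylor_loss t u\<bar> \<le> e' * norm u ^ 2"
    using taylor_loss_remainder_uniform[OF e'] by blast
  show "\<exists>\<delta>>0. \<forall>lam. (\<forall>k<n. 0 \<le> lam k) \<and> (\<Sum>k<n. lam k) = 1 \<and> (\<Sum>k\<in>{1..<n}. lam k ^ 2) < \<delta>\<^sup>2
     \<longrightarrow> \<bar>mix_remainder n m h h' h'' f gradf hessf theta x y lam\<bar> \<le> e * (\<Sum>k\<in>{1..<n}. lam k ^ 2)"
  proof (intro exI[of _ "d / (W + 1)"] conjI allI impI)
    show "d / (W + 1) > 0" using d W by simp
    fix lam :: "nat \<Rightarrow> real"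
    let ?S2 = "\<Sum>k\<in>{1..<n}. lam k ^ 2"
    assume "(\<forall>k<n. 0 \<le> lam k) \<and> (\<Sum>k<n. lam k) = 1 \<and> ?S2 < (d / (W + 1))\<^sup>2"
    then have "sqrt ?S2 < sqrt ((d / (W + 1))\<^sup>2)"
      by (intro real_sqrt_less_mono) auto
    then have "sqrt ?S2 < d / (W + 1)" using d W by simp
    then have "W * sqrt ?S2 \<le> W * (d / (W + 1))" using W by (intro mult_left_mono) auto
    also have "\<dots> < d" using d W by (simp add: field_simps)
    finally have small: "W * sqrt ?S2 < d" .
    have S2: "?S2 \<ge> 0" by (intro sum_nonneg) auto
    have "\<bar>loss h f theta (x t + mix_offset lam t j, y t) - taylor_loss t (mix_offset lam t j)\<bar> \<le> e * ?S2"
      if t: "t < m" and j: "j \<in> PiE {1..<n} (\<lambda>_. {..<m})" for t j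
    proof -
      have "\<bar>loss h f theta (x t + mix_offset lam t j, y t) - taylor_loss t (mix_offset lam t j)\<bar>
          \<le> e' * norm (mix_offset lam t j) ^ 2"
      proof -
        have "norm (mix_offset lam t j) < d" using offset[OF t j, of lam] small by linarith
        then show ?thesis using taylor t by blast
      qed
      also have "\<dots> \<le> e' * (W * sqrt ?S2)\<^sup>2"
        using offset[OF t j, of lam] e' by (intro mult_left_mono power_mono) auto
      also have "\<dots> = (e' * W\<^sup>2) * ?S2" using S2 by (simp add: power_mult_distrib)
      also have "\<dots> \<le> e * ?S2" using eW S2 by (rule mult_right_mono)
      finally show ?thesis .
    qed
    then show "\<bar>mix_remainder n m h h' h'' f gradf hessf theta x y lam\<bar> \<le> e * ?S2"
      unfolding mix_remainder_eq
      using abs_mean_PiE_le[where a="\<lambda>t j. loss h f theta (x t + mix_offset lam t j, y t)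
          - taylor_loss t (mix_offset lam t j)" and B="e * ?S2" and K="{1..<n}", OF m_pos finite_atLeastLessThan]
      by simp
  qed
qed

end

theorem theorem5:
  fixes n m :: nat and alpha :: "nat \<Rightarrow> real"
    and x :: "nat \<Rightarrow> real^'p" and y :: "nat \<Rightarrow> real"
    and f :: "'t \<Rightarrow> real^'p \<Rightarrow> real" and theta :: 't
    and gradf :: "real^'p \<Rightarrow> real^'p" and hessf :: "real^'p \<Rightarrow> real^'p^'p"
    and h h' h'' :: "real \<Rightarrow> real"
  assumes n2: "n \<ge> 2"
    and alpha_pos: "\<forall>k<n. alpha k > 0"
    and m_pos: "m > 0"
    and f_grad: "\<forall>z. (f theta has_derivative (\<lambda>v. gradf z \<bullet> v)) (at z)"
    and f_hess: "\<forall>z. (gradf has_derivative (\<lambda>v. hessf z *v v)) (at z)"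
    and h_d1: "\<forall>t. (h has_real_derivative h' t) (at t)"
    and h_d2: "\<forall>t. (h' has_real_derivative h'' t) (at t)"
  shows
    "let E = tilde_expect n alpha;
         Er = emp_mean_diff m x;
         S2 = E (\<lambda>lam. \<Sum>j\<in>{1..<n}. lam j ^ 2);
         S2c = E (\<lambda>lam. (1 - lam 0) ^ 2 - (\<Sum>j\<in>{1..<n}. lam j ^ 2));
         R1 = E (\<lambda>lam. 1 - lam 0) / real m *
                (\<Sum>i<m. (h' (f theta (x i)) - y i) * (gradf (x i) \<bullet> Er i));
         R2 = S2 / (2 * real m) *
                (\<Sum>i<m. h'' (f theta (x i)) *
                   (gradf (x i) \<bullet> (((1 / real m) *\<^sub>R (\<Sum>j<m. outer (x j - x i) (x j - x i))) *v gradf (x i))))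
              + S2c / (2 * real m) *
                (\<Sum>i<m. h'' (f theta (x i)) *
                   (gradf (x i) \<bullet> (outer (Er i) (Er i) *v gradf (x i))));
         R3 = S2 / (2 * real m) *
                (\<Sum>i<m. (h' (f theta (x i)) - y i) *
                   (1 / real m * (\<Sum>j<m. (x j - x i) \<bullet> (hessf (x i) *v (x j - x i)))))
              + S2c / (2 * real m) *
                (\<Sum>i<m. (h' (f theta (x i)) - y i) * (Er i \<bullet> (hessf (x i) *v Er i)));
         rho = mix_remainder n m h h' h'' f gradf hessf theta x y
     in (\<forall>l<n. integrable (dirichlet n (dir_shift n alpha l)) rho)
        \<and> nmix_loss n alpha m h f theta x y
            = std_loss m h f theta x y + R1 + R2 + R3 + E rho
        \<and> (\<forall>e>0. \<exists>\<delta>>0. \<forall>lam. (\<forall>k<n. 0 \<le> lam k) \<and> (\<Sum>k<n. lam k) = 1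
                 \<and> (\<Sum>k\<in>{1..<n}. lam k ^ 2) < \<delta>\<^sup>2
                 \<longrightarrow> \<bar>rho lam\<bar> \<le> e * (\<Sum>k\<in>{1..<n}. lam k ^ 2))"
proof -
  interpret nmixup n m alpha x y f theta gradf hessf h h' h''
    using assms by unfold_locales auto
  have half_mean: "1 / real m * (\<Sum>t<m. 1/2 * (p t + q t)) = 1 / (2 * real m) * sum p {..<m} + 1 / (2 * real m) * sum q {..<m}"
    for p q :: "nat \<Rightarrow> real"
  proof -
    have "(\<Sum>t<m. 1/2 * (p t + q t)) = 1/2 * (sum p {..<m} + sum q {..<m})"
      by (simp only: sum_distrib_left[symmetric] sum.distrib)
    then show ?thesis using m_pos by (simp only:) (simp add: field_simps)
  qed
  have "nmix_loss n alpha m h f theta x y = std_loss m h f theta x y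
     + first_order_coef * tilde_expect n alpha (\<lambda>lam. 1 - lam 0)
     + diagonal_coef * tilde_expect n alpha (\<lambda>lam. \<Sum>j\<in>{1..<n}. lam j ^ 2)
     + cross_coef * tilde_expect n alpha (\<lambda>lam. (1 - lam 0) ^ 2 - (\<Sum>j\<in>{1..<n}. lam j ^ 2))
     + tilde_expect n alpha (mix_remainder n m h h' h'' f gradf hessf theta x y)"
    unfolding nmix_loss_eq_tilde_expect by (rule tilde_expect_anchored_mix_loss)
  then show ?thesis
    using integrable_mix_remainder[OF dir_shift_pos[OF alpha_pos]] mix_remainder_little_o
    unfolding Let_def first_order_coef_def diagonal_coef_def cross_coef_def first_order_term_def
      diagonal_term_def cross_term_def half_mean
    by (simp add: algebra_simps)
qed

end
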